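(* Let $N\in\{1,2,3,4\}$, let $t$ be a positive integer and let $k$ be an integer. Suppose that $\nu$ is a multiplier system on $\Gamma^*(N)$ which takes values among the $2t$-th roots of unity, and that $\nu$ is trivial on $\Gamma_0(Nt,t)$. Then for every prime $p\nmid N$ with $p^{2}\equiv 1\pmod{2t}$ and every integer $n\ge 1$, the operator $T_k^{(t)}(p^{n})$ maps $M_k^!(\Gamma^*(N),\nu)$ into $M_k^!(\Gamma^*(N),\nu^{p^{n}})$.
   Context: For $N\in\{1,2,3,4\}$, $\Gamma^*(N)$ is the Fricke group, the group generated by $\Gamma_0(N)$ and the Fricke involution $W_N=\begin{pmatrix}0&-1\\N&0\end{pmatrix}$; for these $N$ it is generated by $T=\begin{pmatrix}1&1\\0&1\end{pmatrix}$ and $W_N$. For positive integers $M,N$, $\Gamma_0(M,N)=\{\begin{pmatrix}a&b\\c&d\end{pmatrix}\in SL_2(\mathbb{Z}): M\mid c,\ N\mid b\}$. For $\gamma=\begin{pmatrix}a&b\\c&d\end{pmatrix}\in GL_2^+(\mathbb{Q})$ the slash operator is $f|_k\gamma(z)=(\det\gamma)^{k/2}(cz+d)^{-k}f\left(\frac{az+b}{cz+d}\right)$. A multiplier system $\nu$ on a group $\Gamma$ is a character $\Gamma\to\{z\in\mathbb{C}:|z|=1\}$. $M_k^!(\Gamma,\nu)$ denotes the space of holomorphic functions $f$ on the upper half-plane whose poles are supported at the cusps (i.e. meromorphic at the cusps) and which satisfy $f|_k\gamma=\nu(\gamma)f$ for all $\gamma\in\Gamma$. For a prime $p$, the conjugated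 Hecke operator is $f|T_k^{(t)}(p)=p^{k/2-1}\left(\sum_{\lambda=0}^{p-1}f|_k\begin{pmatrix}1&t\lambda\\0&p\end{pmatrix}+f|_k\begin{pmatrix}p&0\\0&1\end{pmatrix}\right)$; on expansions $f=\sum a(n)q^{n/t}$ ($q=e^{2\pi i z}$) it acts by $f|T_k^{(t)}(p)=\sum\left(a(pn)+p^{k-1}a(n/p)\right)q^{n/t}$, with $a(n/p)=0$ if $p\nmid n$. One sets $T_k^{(t)}(1)=\mathrm{id}$ and $T_k^{(t)}(p^{n+1})=T_k^{(t)}(p^n)T_k^{(t)}(p)-p^{k-1}T_k^{(t)}(p^{n-1})$ for $n\ge1$. *)

theory Defs
  imports "HOL-Complex_Analysis.Complex_Analysis" "HOL-Number_Theory.Number_Theory"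
begin

text \<open>2x2 real matrices (a,b,c,d) standing for [[a,b],[c,d]].\<close>
type_synonym mat2 = "real \<times> real \<times> real \<times> real"

definition mmul :: "mat2 \<Rightarrow> mat2 \<Rightarrow> mat2" where
  "mmul x y = (case x of (a,b,c,d) \<Rightarrow> case y of (a',b',c',d') \<Rightarrow>
      (a*a' + b*c', a*b' + b*d', c*a' + d*c', c*b' + d*d'))"

definition mdet :: "mat2 \<Rightarrow> real" where
  "mdet x = (case x of (a,b,c,d) \<Rightarrow> a*d - b*c)"

definition minv :: "mat2 \<Rightarrow> mat2" where
  "minv x = (case x of (a,b,c,d) \<Rightarrow> (d / mdet x, - b / mdet x, - c / mdet x, a / mdet x))"

definition upper_half_plane :: "complex set" where
  "upper_half_plane = {z. Im z > 0}"

definition slash :: "int \<Rightarrow> mat2 \<Rightarrow> (complex \<Rightarrow> complex) \<Rightarrow> complex \<Rightarrow> complex" where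
  "slash k g f z = (case g of (a,b,c,d) \<Rightarrow>
      complex_of_real (mdet g powr (of_int k / 2)) *
      (of_real c * z + of_real d) powi (- k) *
      f ((of_real a * z + of_real b) / (of_real c * z + of_real d)))"

definition Gamma0MN :: "nat \<Rightarrow> nat \<Rightarrow> mat2 set" where
  "Gamma0MN M N = {(of_int a, of_int b, of_int c, of_int d) | a b c d :: int.
      a*d - b*c = 1 \<and> int M dvd c \<and> int N dvd b}"

definition SL2Z :: "mat2 set" where
  "SL2Z = Gamma0MN 1 1"

text \<open>Fricke involution W_N = (0 -1; N 0), normalised to determinant 1 (scalar factor
  1/sqrt N); the slash action of the normalised and unnormalised matrix coincide.\<close>
definition fricke_W :: "nat \<Rightarrow> mat2" where
  "fricke_W N = (0, - 1 / sqrt (real N), sqrt (real N), 0)"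

inductive_set fricke_group :: "nat \<Rightarrow> mat2 set" for N :: nat where
  gamma0: "g \<in> Gamma0MN N 1 \<Longrightarrow> g \<in> fricke_group N"
| fricke: "fricke_W N \<in> fricke_group N"
| mult: "g \<in> fricke_group N \<Longrightarrow> h \<in> fricke_group N \<Longrightarrow> mmul g h \<in> fricke_group N"
| inv: "g \<in> fricke_group N \<Longrightarrow> minv g \<in> fricke_group N"

definition multiplier_system :: "mat2 set \<Rightarrow> (mat2 \<Rightarrow> complex) \<Rightarrow> bool" where
  "multiplier_system G \<nu> \<longleftrightarrow>
     (\<forall>g\<in>G. norm (\<nu> g) = 1) \<and> (\<forall>g\<in>G. \<forall>h\<in>G. \<nu> (mmul g h) = \<nu> g * \<nu> h)"

text \<open>Meromorphic at all cusps: for every sigma in SL2(Z), f|_k sigma is periodic with some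
  positive integer period h and, as a function of q_h = exp(2 pi i z / h) on the punctured unit
  disc, has at worst a pole (no essential singularity) at q_h = 0.\<close>
definition meromorphic_at_cusps :: "int \<Rightarrow> (complex \<Rightarrow> complex) \<Rightarrow> bool" where
  "meromorphic_at_cusps k f \<longleftrightarrow>
     (\<forall>\<sigma>\<in>SL2Z. \<exists>h::nat. h > 0 \<and>
        (\<forall>z\<in>upper_half_plane. slash k \<sigma> f (z + of_nat h) = slash k \<sigma> f z) \<and>
        not_essential (\<lambda>q. slash k \<sigma> f (of_nat h * Ln q / (2 * of_real pi * \<i>))) 0)"

definition weakly_holomorphic_mf :: "int \<Rightarrow> mat2 set \<Rightarrow> (mat2 \<Rightarrow> complex) \<Rightarrow> (complex \<Rightarrow> complex) set" where
  "weakly_holomorphic_mf k G \<nu> = {f. f holomorphic_on upper_half_plane \<and>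
      (\<forall>g\<in>G. \<forall>z\<in>upper_half_plane. slash k g f z = \<nu> g * f z) \<and>
      meromorphic_at_cusps k f}"

definition hecke_p :: "int \<Rightarrow> nat \<Rightarrow> nat \<Rightarrow> (complex \<Rightarrow> complex) \<Rightarrow> complex \<Rightarrow> complex" where
  "hecke_p k t p f z = complex_of_real (real p powr (of_int k / 2 - 1)) *
     ((\<Sum>j=0..<p. slash k (1, real t * real j, 0, real p) f z) + slash k (real p, 0, 0, 1) f z)"

fun hecke_pp :: "int \<Rightarrow> nat \<Rightarrow> nat \<Rightarrow> nat \<Rightarrow> (complex \<Rightarrow> complex) \<Rightarrow> complex \<Rightarrow> complex" where
  "hecke_pp k t p 0 f = f"
| "hecke_pp k t p (Suc 0) f = hecke_p k t p f"
| "hecke_pp k t p (Suc (Suc n)) f = (\<lambda>z. hecke_p k t p (hecke_pp k t p (Suc n) f) z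
      - complex_of_real (real p powr (of_int k - 1)) * hecke_pp k t p n f z)"

end

theory Submission
  imports Defs
begin

text \<open>
  Write \<open>f | T(p) = p\<^sup>k\<^sup>/\<^sup>2\<^sup>-\<^sup>1 (\<Sum>\<^sub>j f | \<alpha>\<^sub>j + f | \<alpha>\<^sub>\<infinity>)\<close> with \<open>\<alpha>\<^sub>j = (1, t j; 0, p)\<close> and
  \<open>\<alpha>\<^sub>\<infinity> = (p, 0; 0, 1)\<close>. For \<open>N \<le> 4\<close> the Fricke group is generated by \<open>T = (1, 1; 0, 1)\<close> and \<open>W\<^sub>N\<close>,
  so it suffices to check the transformation law of \<open>f | T(p)\<close> under these two. Translation by
  \<open>1\<close> permutes the \<open>\<alpha>\<^sub>j\<close> up to left factors \<open>T\<^sup>p\<close> and translations by multiples of \<open>t\<close>, on which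
  \<open>\<nu>\<close> is trivial; here \<open>p\<^sup>2 \<equiv> 1 (mod t)\<close> is used. \<open>W\<^sub>N\<close> swaps \<open>\<alpha>\<^sub>0\<close> and \<open>\<alpha>\<^sub>\<infinity>\<close> and permutes the
  remaining \<open>\<alpha>\<^sub>j\<close> up to elements of \<open>\<Gamma>\<^sub>0(N t, t)\<close>, which uses \<open>p \<nmid> N t\<close>; since \<open>\<nu>(W\<^sub>N)\<^sup>2 = 1\<close> and
  \<open>p\<close> is odd, the multiplier \<open>\<nu>(W\<^sub>N)\<close> equals \<open>\<nu>(W\<^sub>N)\<^sup>p\<close>. At every cusp, each \<open>\<alpha> \<sigma>\<close> factors as
  \<open>\<sigma>' (g, b; 0, d)\<close> with \<open>\<sigma>' \<in> SL\<^sub>2(\<int>)\<close>, so meromorphy at the cusps is inherited.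
  Finally \<open>T(p\<^sup>n)\<close> follows by induction from the recursion, as \<open>\<nu>\<^sup>p\<^sup>\<^sup>n\<^sup>+\<^sup>2 = \<nu>\<^sup>p\<^sup>\<^sup>n\<close> when \<open>\<nu>\<^sup>2\<^sup>t = 1\<close>.
\<close>

section \<open>The slash operator\<close>

lemma mdet_mmul: "mdet (mmul g h) = mdet g * mdet h"
  by (cases g; cases h) (auto simp: mdet_def mmul_def algebra_simps)

lemma mobius_denom_nonzero:
  fixes a b c d :: real
  assumes "a*d - b*c > 0" "Im z > 0"
  shows "of_real c * z + of_real d \<noteq> 0"
proof
  assume h: "of_real c * z + of_real d = 0"
  hence "Im (of_real c * z + of_real d) = 0" by simp
  hence "c * Im z = 0" by simp
  hence c: "c = 0" using assms(2) by simp
  with h have "d = 0" by simp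
  with c assms(1) show False by simp
qed

lemma Im_mobius_pos:
  fixes a b c d :: real
  assumes "a*d - b*c > 0" "Im z > 0"
  shows "Im ((of_real a * z + of_real b) / (of_real c * z + of_real d)) > 0"
proof -
  have "c * Im z \<noteq> 0 \<or> c * Re z + d \<noteq> 0"
    using mobius_denom_nonzero[OF assms] by (auto simp: complex_eq_iff)
  hence "(c * Re z + d)^2 + (c * Im z)^2 > 0"
    by (auto simp: add_pos_nonneg add_nonneg_pos)
  moreover have "Im ((of_real a * z + of_real b) / (of_real c * z + of_real d)) =
      (a*d - b*c) * Im z / ((c * Re z + d)^2 + (c * Im z)^2)"
    by (simp add: Im_divide algebra_simps power2_eq_square)
  ultimately show ?thesis using assms by simp
qed

lemma slash_mmul:
  assumes "mdet g > 0" "mdet h > 0" "Im z > 0"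
  shows "slash k h (slash k g f) z = slash k (mmul g h) f z"
proof -
  obtain a b c d where g: "g = (a,b,c,d)" by (cases g) auto
  obtain a' b' c' d' where h: "h = (a',b',c',d')" by (cases h) auto
  have dg: "a*d - b*c > 0" and dh: "a'*d' - b'*c' > 0" using assms by (auto simp: g h mdet_def)
  define w where "w = (of_real a' * z + of_real b') / (of_real c' * z + of_real d')"
  have j1: "of_real c' * z + of_real d' \<noteq> 0" by (rule mobius_denom_nonzero[OF dh assms(3)])
  have wpos: "Im w > 0" unfolding w_def by (rule Im_mobius_pos[OF dh assms(3)])
  have j2: "of_real c * w + of_real d \<noteq> 0" by (rule mobius_denom_nonzero[OF dg wpos])
  have cocycle: "(of_real c * w + of_real d) * (of_real c' * z + of_real d') =
      of_real (c * a' + d * c') * z + of_real (c * b' + d * d')"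
    using j1 by (simp add: w_def field_simps)
  have action: "(of_real a * w + of_real b) / (of_real c * w + of_real d) =
      (of_real (a * a' + b * c') * z + of_real (a * b' + b * d')) /
      (of_real (c * a' + d * c') * z + of_real (c * b' + d * d'))"
  proof -
    have "(of_real a * w + of_real b) * (of_real c' * z + of_real d') =
      of_real (a * a' + b * c') * z + of_real (a * b' + b * d')"
      using j1 by (simp add: w_def field_simps)
    thus ?thesis using cocycle j1 j2 by (metis mult_divide_mult_cancel_right)
  qed
  have det_factor: "complex_of_real ((mdet g * mdet h) powr (of_int k / 2)) =
      complex_of_real (mdet h powr (of_int k / 2)) * complex_of_real (mdet g powr (of_int k / 2))"
    using assms by (simp add: powr_mult)
  have automorphy_factor:
    "(of_real c * w + of_real d) powi (- k) * (of_real c' * z + of_real d') powi (- k) =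
     (of_real (c * a' + d * c') * z + of_real (c * b' + d * d')) powi (-k)"
    by (simp only: cocycle[symmetric] power_int_mult_distrib)
  have L: "slash k h (slash k g f) z = complex_of_real (mdet h powr (of_int k / 2)) *
      (of_real c' * z + of_real d') powi (-k) * (complex_of_real (mdet g powr (of_int k / 2)) *
      (of_real c * w + of_real d) powi (-k) * f ((of_real a * w + of_real b)/(of_real c*w + of_real d)))"
    unfolding slash_def w_def by (simp only: g h prod.case)
  have R: "slash k (mmul g h) f z = complex_of_real ((mdet g * mdet h) powr (of_int k / 2)) *
      (of_real (c * a' + d * c') * z + of_real (c * b' + d * d')) powi (-k) *
      f ((of_real (a * a' + b * c') * z + of_real (a * b' + b * d')) /
      (of_real (c * a' + d * c') * z + of_real (c * b' + d * d')))"
    unfolding slash_def mdet_mmul by (simp only: g h mmul_def prod.case)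
  show ?thesis unfolding L R det_factor automorphy_factor[symmetric] action by (simp only: mult_ac)
qed

lemma slash_cong:
  assumes "mdet g > 0" "Im z > 0" "\<And>w. Im w > 0 \<Longrightarrow> f1 w = f2 w"
  shows "slash k g f1 z = slash k g f2 z"
proof -
  obtain a b c d where g: "g = (a,b,c,d)" by (cases g) auto
  have "Im ((of_real a * z + of_real b) / (of_real c * z + of_real d)) > 0"
    using assms by (intro Im_mobius_pos) (auto simp: g mdet_def)
  thus ?thesis using assms(3) by (simp add: slash_def g)
qed

lemma slash_cmult: "slash k g (\<lambda>w. C * f w) z = C * slash k g f z"
  by (cases g) (simp add: slash_def)

lemma slash_diff: "slash k g (\<lambda>w. f1 w - f2 w) z = slash k g f1 z - slash k g f2 z"
  by (cases g) (simp add: slash_def algebra_simps)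

lemma slash_add: "slash k g (\<lambda>w. f1 w + f2 w) z = slash k g f1 z + slash k g f2 z"
  by (cases g) (simp add: slash_def algebra_simps)

lemma slash_sum: "slash k g (\<lambda>w. \<Sum>i\<in>I. F i w) z = (\<Sum>i\<in>I. slash k g (F i) z)"
  by (cases g) (simp add: slash_def sum_distrib_left sum_distrib_right)

lemma slash_translation: "slash k (1, x, 0, 1) f z = f (z + of_real x)"
  by (simp add: slash_def mdet_def)

lemma holomorphic_on_slash:
  assumes "f holomorphic_on upper_half_plane" "mdet g > 0"
  shows "slash k g f holomorphic_on upper_half_plane"
proof -
  obtain a b c d where g: "g = (a,b,c,d)" by (cases g) auto
  have dg: "a*d - b*c > 0" using assms by (simp add: g mdet_def)
  define m :: "complex \<Rightarrow> complex" where "m z = (of_real a * z + of_real b) / (of_real c * z + of_real d)" for z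
  have nz: "\<forall>z\<in>upper_half_plane. of_real c * z + of_real d \<noteq> 0"
    using mobius_denom_nonzero[OF dg] by (auto simp: upper_half_plane_def)
  have "m holomorphic_on upper_half_plane"
    using nz unfolding m_def by (intro holomorphic_intros) auto
  moreover have "m ` upper_half_plane \<subseteq> upper_half_plane"
    using Im_mobius_pos[OF dg] by (auto simp: upper_half_plane_def m_def)
  ultimately have "(\<lambda>z. f (m z)) holomorphic_on upper_half_plane"
    using holomorphic_on_compose_gen[OF _ assms(1)] by (simp add: o_def)
  hence "(\<lambda>z. complex_of_real (mdet g powr (of_int k / 2)) * (of_real c * z + of_real d) powi (-k) *
      f (m z)) holomorphic_on upper_half_plane"
    by (intro holomorphic_intros) (use nz in auto)
  thus ?thesis unfolding slash_def g m_def by simp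
qed

section \<open>The Fricke group and its generators\<close>

abbreviation id_mat :: mat2 where "id_mat \<equiv> (1, 0, 0, 1)"

lemma mmul_minv: "mdet g = 1 \<Longrightarrow> mmul g (minv g) = id_mat"
  by (cases g) (auto simp: mmul_def minv_def mdet_def field_simps)

lemma mdet_minv: "mdet g = 1 \<Longrightarrow> mdet (minv g) = 1"
  by (cases g) (auto simp: minv_def mdet_def field_simps)

lemma mdet_fricke_W: "N > 0 \<Longrightarrow> mdet (fricke_W N) = 1"
  by (simp add: mdet_def fricke_W_def)

lemma fricke_W_square: "N > 0 \<Longrightarrow> mmul (fricke_W N) (fricke_W N) = (-1, 0, 0, -1)"
  by (simp add: mmul_def fricke_W_def)

lemma fricke_W_conj_translation:
  assumes "N > 0"
  shows "mmul (mmul (fricke_W N) (1, x, 0, 1)) (minv (fricke_W N)) = (1, 0, - real N * x, 1)"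
  using assms by (simp add: minv_def mmul_def fricke_W_def mdet_def field_simps)

lemma mdet_Gamma0MN: "g \<in> Gamma0MN M L \<Longrightarrow> mdet g = 1"
proof -
  assume "g \<in> Gamma0MN M L"
  then obtain a b c d :: int where "g = (of_int a, of_int b, of_int c, of_int d)" "a*d - b*c = 1"
    by (auto simp: Gamma0MN_def)
  thus ?thesis by (simp add: mdet_def) (metis of_int_1 of_int_diff of_int_mult)
qed

lemma mdet_fricke_group: "g \<in> fricke_group N \<Longrightarrow> N > 0 \<Longrightarrow> mdet g = 1"
  by (induction rule: fricke_group.induct)
     (auto simp: mdet_Gamma0MN mdet_fricke_W mdet_mmul mdet_minv)

lemma Gamma0_in_fricke_group:
  fixes a b c d :: int
  assumes "a*d - b*c = 1" "int N dvd c"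
  shows "(of_int a, of_int b, of_int c, of_int d) \<in> fricke_group N"
  using assms by (intro fricke_group.gamma0) (auto simp: Gamma0MN_def)

lemma Gamma0MN_subset_fricke_group: "Gamma0MN (N*t) t \<subseteq> fricke_group N"
proof
  fix g assume "g \<in> Gamma0MN (N*t) t"
  then obtain a b c d :: int where "g = (of_int a, of_int b, of_int c, of_int d)" "a*d - b*c = 1"
     "int N * int t dvd c" by (auto simp: Gamma0MN_def)
  thus "g \<in> fricke_group N" using Gamma0_in_fricke_group dvd_mult_left by blast
qed

lemma id_mat_in_fricke_group: "id_mat \<in> fricke_group N"
  using Gamma0_in_fricke_group[of 1 1 0 0 N] by simp

lemma translation_in_fricke_group: "(1, of_int m, 0, 1) \<in> fricke_group N"
  using Gamma0_in_fricke_group[of 1 1 m 0 N] by simp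

lemma lower_translation_in_fricke_group: "int N dvd s \<Longrightarrow> (1, 0, of_int s, 1) \<in> fricke_group N"
  using Gamma0_in_fricke_group[of 1 1 0 s N] by simp

lemma multiplier_system_id:
  assumes "multiplier_system G \<mu>" "id_mat \<in> G"
  shows "\<mu> id_mat = 1"
proof -
  have "mmul id_mat id_mat = id_mat" by (simp add: mmul_def)
  hence "\<mu> id_mat = \<mu> id_mat * \<mu> id_mat" using assms unfolding multiplier_system_def by metis
  moreover have "\<mu> id_mat \<noteq> 0" using assms by (auto simp: multiplier_system_def)
  ultimately show ?thesis by simp
qed

lemma exists_centered_remainder:
  fixes x y :: int
  assumes "y \<noteq> 0"
  shows "\<exists>m. 2 * \<bar>x + y * m\<bar> \<le> \<bar>y\<bar>"
proof -
  define r where "r = x mod \<bar>y\<bar>"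
  have r: "0 \<le> r" "r < \<bar>y\<bar>" using assms by (auto simp: r_def)
  obtain q where q: "x = \<bar>y\<bar> * q + r" unfolding r_def by (metis div_mult_mod_eq mult.commute)
  obtain e where e: "\<bar>y\<bar> = y * e" "e = 1 \<or> e = -1"
    by (cases "y \<ge> 0") (auto intro: that[of 1] that[of "-1"])
  show ?thesis
  proof (cases "2 * r \<le> \<bar>y\<bar>")
    case True
    have "x + y * (- (e*q)) = r" using q e by (simp add: algebra_simps)
    thus ?thesis using True r by (intro exI[of _ "- (e*q)"]) simp
  next
    case False
    have "x + y * (- (e*q) - e) = r - \<bar>y\<bar>" using q e by (simp add: algebra_simps)
    thus ?thesis using False r by (intro exI[of _ "- (e*q) - e"]) simp
  qed
qed

text \<open>This is the only place where \<open>N \<le> 4\<close> is used: for \<open>c \<noteq> 0\<close>, right multiplication by a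
  translation and a lower translation in \<open>\<Gamma>\<^sub>0(N)\<close> makes \<open>|c|\<close> strictly smaller, since
  \<open>|c'| \<le> N |c| / 4\<close> after two centered reductions, with equality excluded when \<open>N = 4\<close>.\<close>
lemma fricke_descent_step:
  fixes a b c d :: int
  assumes "N \<in> {1,2,3,4}" "a*d - b*c = 1" "int N dvd c" "c \<noteq> 0"
  shows "\<exists>m s. int N dvd s \<and> \<bar>c + (d + c*m) * s\<bar> < \<bar>c\<bar>"
proof -
  obtain m where m: "2 * \<bar>d + c * m\<bar> \<le> \<bar>c\<bar>" using exists_centered_remainder[OF assms(4)] by blast
  define d' where "d' = d + c*m"
  define b' where "b' = b + a*m"
  have det: "a*d' - b'*c = 1" using assms(2) by (simp add: d'_def b'_def algebra_simps)
  show ?thesis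
  proof (cases "d' = 0")
    case True
    hence "\<bar>c\<bar> = 1" using det zmult_eq_1_iff[of "-b'" c] by auto
    hence "int N dvd 1" using assms(3) by (metis dvd_abs_iff)
    hence "N = 1" by simp
    have "c + (d + c*(m+1)) * (-1) = 0" using True by (simp add: d'_def algebra_simps)
    hence "int N dvd -1 \<and> \<bar>c + (d + c*(m+1)) * (-1)\<bar> < \<bar>c\<bar>" using \<open>N = 1\<close> assms(4) by simp
    thus ?thesis by blast
  next
    case False
    then obtain n where n: "2 * \<bar>c + (int N * d') * n\<bar> \<le> \<bar>int N * d'\<bar>"
      using exists_centered_remainder assms(1) by fastforce
    have n2: "2 * \<bar>c + d' * (int N * n)\<bar> \<le> int N * \<bar>d'\<bar>"
      using n by (simp add: abs_mult algebra_simps)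
    have m2: "2 * \<bar>d'\<bar> \<le> \<bar>c\<bar>" using m by (simp add: d'_def)
    have "int N * (2 * \<bar>d'\<bar>) \<le> int N * \<bar>c\<bar>" using m2 by (intro mult_left_mono) auto
    hence A: "4 * \<bar>c + d' * (int N * n)\<bar> \<le> int N * \<bar>c\<bar>" using n2 by linarith
    have "\<bar>c + d' * (int N * n)\<bar> < \<bar>c\<bar>"
    proof (cases "N = 4")
      case False
      hence "int N * \<bar>c\<bar> < 4 * \<bar>c\<bar>" using assms(1,4) by auto
      hence "4 * \<bar>c + d' * (int N * n)\<bar> < 4 * \<bar>c\<bar>" using A by (rule le_less_trans[rotated])
      thus ?thesis by simp
    next
      case True
      have "4 * \<bar>c + d' * (int N * n)\<bar> \<noteq> 4 * \<bar>c\<bar>"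
      proof
        assume "4 * \<bar>c + d' * (int N * n)\<bar> = 4 * \<bar>c\<bar>"
        hence "2 * \<bar>d'\<bar> = \<bar>c\<bar>" using n2 m2 True by simp
        hence "c = 2*d' \<or> c = -2*d'" by (auto simp: abs_if split: if_splits)
        hence "d' * (a - 2*b') = 1 \<or> d' * (a + 2*b') = 1" using det by (auto simp: algebra_simps)
        hence "\<bar>c\<bar> = 2" using \<open>2 * \<bar>d'\<bar> = \<bar>c\<bar>\<close> zmult_eq_1_iff by auto
        moreover have "4 dvd \<bar>c\<bar>" using assms(3) True by simp
        ultimately show False by simp
      qed
      thus ?thesis using A True by simp
    qed
    thus ?thesis by (intro exI[of _ m] exI[of _ "int N * n"]) (auto simp: d'_def)
  qed
qed

definition slash_invariant :: "int \<Rightarrow> (mat2 \<Rightarrow> complex) \<Rightarrow> (complex \<Rightarrow> complex) \<Rightarrow> mat2 \<Rightarrow> bool" where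
  "slash_invariant k \<mu> F g \<longleftrightarrow> (\<forall>z. Im z > 0 \<longrightarrow> slash k g F z = \<mu> g * F z)"

locale fricke_generators_invariant =
  fixes N :: nat and k :: int and \<mu> :: "mat2 \<Rightarrow> complex" and F :: "complex \<Rightarrow> complex"
  assumes N: "N \<in> {1,2,3,4}"
    and multiplier: "multiplier_system (fricke_group N) \<mu>"
    and invariant_T: "slash_invariant k \<mu> F (1, 1, 0, 1)"
    and invariant_W: "slash_invariant k \<mu> F (fricke_W N)"
begin

lemma N_pos: "N > 0"
  using N by auto

lemma invariant_mmul:
  assumes g: "g \<in> fricke_group N" and h: "h \<in> fricke_group N"
    and "slash_invariant k \<mu> F g" "slash_invariant k \<mu> F h"
  shows "slash_invariant k \<mu> F (mmul g h)"
  unfolding slash_invariant_def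
proof (intro allI impI)
  fix z :: complex assume z: "Im z > 0"
  have dg: "mdet g > 0" and dh: "mdet h > 0"
    using mdet_fricke_group[OF g N_pos] mdet_fricke_group[OF h N_pos] by auto
  have "slash k (mmul g h) F z = slash k h (slash k g F) z" using slash_mmul[OF dg dh z] by simp
  also have "\<dots> = slash k h (\<lambda>w. \<mu> g * F w) z"
    using assms(3) by (intro slash_cong[OF dh z]) (auto simp: slash_invariant_def)
  also have "\<dots> = \<mu> g * (\<mu> h * F z)" using assms(4) z by (simp add: slash_cmult slash_invariant_def)
  also have "\<dots> = \<mu> (mmul g h) * F z" using multiplier g h by (simp add: multiplier_system_def)
  finally show "slash k (mmul g h) F z = \<mu> (mmul g h) * F z" .
qed

lemma invariant_minv:
  assumes g: "g \<in> fricke_group N" and inv_g: "slash_invariant k \<mu> F g"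
  shows "slash_invariant k \<mu> F (minv g)"
  unfolding slash_invariant_def
proof (intro allI impI)
  fix z :: complex assume z: "Im z > 0"
  have g1: "mdet g = 1" using mdet_fricke_group[OF g N_pos] .
  have gi: "minv g \<in> fricke_group N" using g by (rule fricke_group.inv)
  have dg: "mdet g > 0" and dh: "mdet (minv g) > 0" using g1 mdet_minv[OF g1] by auto
  have u: "\<mu> g * \<mu> (minv g) = 1"
    using multiplier g gi multiplier_system_id[OF multiplier id_mat_in_fricke_group] mmul_minv[OF g1]
    by (metis multiplier_system_def)
  have "\<mu> g * slash k (minv g) F z = slash k (minv g) (\<lambda>w. \<mu> g * F w) z" by (simp add: slash_cmult)
  also have "\<dots> = slash k (minv g) (slash k g F) z"
    using inv_g by (intro slash_cong[OF dh z]) (auto simp: slash_invariant_def)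
  also have "\<dots> = F z"
    using slash_mmul[OF dg dh z] mmul_minv[OF g1] slash_translation[of k 0 F z] by simp
  finally have "\<mu> g * slash k (minv g) F z = F z" .
  hence "\<mu> (minv g) * (\<mu> g * slash k (minv g) F z) = \<mu> (minv g) * F z" by simp
  thus "slash k (minv g) F z = \<mu> (minv g) * F z"
    using u by (simp add: mult.assoc[symmetric] mult.commute)
qed

lemma invariant_translation_nat: "slash_invariant k \<mu> F (1, real n, 0, 1)"
proof (induction n)
  case 0
  show ?case using multiplier_system_id[OF multiplier id_mat_in_fricke_group]
    by (simp add: slash_invariant_def slash_translation)
next
  case (Suc n)
  have "mmul (1, real n, 0, 1) (1, 1, 0, 1) = (1, real (Suc n), 0, 1)" by (simp add: mmul_def)
  moreover have "(1, real n, 0, 1) \<in> fricke_group N"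
    using translation_in_fricke_group[of "int n" N] by simp
  moreover have "(1, 1, 0, 1) \<in> fricke_group N" using translation_in_fricke_group[of 1 N] by simp
  ultimately show ?case using invariant_mmul Suc invariant_T by metis
qed

lemma invariant_translation: "slash_invariant k \<mu> F (1, of_int m, 0, 1)"
proof (cases "m \<ge> 0")
  case True
  thus ?thesis using invariant_translation_nat[of "nat m"] by simp
next
  case False
  define n where "n = nat (-m)"
  have m: "m = - int n" using False by (simp add: n_def)
  have "minv (1, real n, 0, 1) = (1, of_int m, 0, 1)" by (simp add: minv_def mdet_def m)
  moreover have "(1, real n, 0, 1) \<in> fricke_group N"
    using translation_in_fricke_group[of "int n" N] by simp
  ultimately show ?thesis using invariant_minv invariant_translation_nat by metis
qed

lemma minus_id_in_fricke_group: "(-1, 0, 0, -1) \<in> fricke_group N"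
  using fricke_group.mult[OF fricke_group.fricke[of N] fricke_group.fricke[of N]]
    fricke_W_square[OF N_pos] by simp

lemma invariant_minus_id: "slash_invariant k \<mu> F (-1, 0, 0, -1)"
  using invariant_mmul[OF fricke_group.fricke fricke_group.fricke invariant_W invariant_W]
    fricke_W_square[OF N_pos] by simp

text \<open>Lower translations are the conjugates of translations by \<open>W\<^sub>N\<close>.\<close>
lemma invariant_lower_translation:
  assumes "int N dvd s"
  shows "slash_invariant k \<mu> F (1, 0, of_int s, 1)"
proof -
  obtain n where n: "s = int N * n" using assms by (auto simp: dvd_def)
  let ?W = "fricke_W N" and ?T = "(1, of_int (-n), 0, 1) :: mat2"
  have "mmul (mmul ?W ?T) (minv ?W) = (1, 0, of_int s, 1)"
    using fricke_W_conj_translation[OF N_pos] by (simp add: n)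
  moreover have "mmul ?W ?T \<in> fricke_group N"
    using fricke_group.fricke translation_in_fricke_group by (rule fricke_group.mult)
  moreover have "slash_invariant k \<mu> F (mmul ?W ?T)"
    using invariant_mmul[OF fricke_group.fricke translation_in_fricke_group
        invariant_W invariant_translation] .
  moreover have "minv ?W \<in> fricke_group N" using fricke_group.fricke by (rule fricke_group.inv)
  moreover have "slash_invariant k \<mu> F (minv ?W)"
    using invariant_minv[OF fricke_group.fricke invariant_W] .
  ultimately show ?thesis using invariant_mmul by metis
qed

lemma invariant_Gamma0:
  assumes "a*d - b*c = 1" "int N dvd c"
  shows "slash_invariant k \<mu> F (of_int a, of_int b, of_int c, of_int d)"
  using assms
proof (induction "nat \<bar>c\<bar>" arbitrary: a b c d rule: less_induct)
  case less
  show ?case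
  proof (cases "c = 0")
    case True
    hence "(a = 1 \<and> d = 1) \<or> (a = -1 \<and> d = -1)" using less.prems(1) zmult_eq_1_iff by auto
    thus ?thesis
    proof
      assume "a = 1 \<and> d = 1" thus ?thesis using invariant_translation[of b] True by simp
    next
      assume ad: "a = -1 \<and> d = -1"
      have "mmul (-1, 0, 0, -1) (1, of_int (-b), 0, 1) = (of_int a, of_int b, of_int c, of_int d)"
        using ad True by (simp add: mmul_def)
      thus ?thesis using invariant_mmul[OF minus_id_in_fricke_group translation_in_fricke_group
          invariant_minus_id invariant_translation[of "-b"]] by simp
    qed
  next
    case False
    obtain m s where s: "int N dvd s" and smaller: "\<bar>c + (d + c*m) * s\<bar> < \<bar>c\<bar>"
      using fricke_descent_step[OF N less.prems False] by blast
    define b' where "b' = b + a*m"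
    define d' where "d' = d + c*m"
    define a'' where "a'' = a + b' * s"
    define c'' where "c'' = c + d' * s"
    define \<gamma> :: mat2 where "\<gamma> = (of_int a'', of_int b', of_int c'', of_int d')"
    have det: "a'' * d' - b' * c'' = 1" using less.prems(1)
      by (simp add: a''_def c''_def b'_def d'_def algebra_simps)
    have N_dvd: "int N dvd c''" using less.prems(2) s by (simp add: c''_def)
    have "slash_invariant k \<mu> F \<gamma>"
      unfolding \<gamma>_def using smaller det N_dvd by (intro less.hyps) (auto simp: c''_def d'_def)
    moreover have \<gamma>: "\<gamma> \<in> fricke_group N" unfolding \<gamma>_def using det N_dvd by (rule Gamma0_in_fricke_group)
    moreover have "int N dvd - s" using s by simp
    ultimately have "slash_invariant k \<mu> F (mmul (mmul \<gamma> (1, 0, of_int (-s), 1)) (1, of_int (-m), 0, 1))"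
      by (metis invariant_mmul fricke_group.mult lower_translation_in_fricke_group
          invariant_lower_translation translation_in_fricke_group invariant_translation)
    moreover have "mmul (mmul \<gamma> (1, 0, of_int (-s), 1)) (1, of_int (-m), 0, 1) =
        (of_int a, of_int b, of_int c, of_int d)"
      by (simp add: \<gamma>_def mmul_def a''_def b'_def c''_def d'_def algebra_simps)
    ultimately show ?thesis by simp
  qed
qed

theorem invariant_fricke_group:
  assumes "g \<in> fricke_group N"
  shows "slash_invariant k \<mu> F g"
  using assms
proof (induction rule: fricke_group.induct)
  case (gamma0 g)
  thus ?case by (auto simp: Gamma0MN_def intro: invariant_Gamma0)
qed (use invariant_W invariant_mmul invariant_minv in auto)

end

section \<open>Invariance of \<open>T\<^sub>k\<^sup>(\<^sup>t\<^sup>)(p)\<close> under the generators\<close>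

abbreviation hecke_alpha :: "nat \<Rightarrow> nat \<Rightarrow> nat \<Rightarrow> mat2" where
  "hecke_alpha t p j \<equiv> (1, real t * real j, 0, real p)"

abbreviation hecke_alpha_inf :: "nat \<Rightarrow> mat2" where
  "hecke_alpha_inf p \<equiv> (real p, 0, 0, 1)"

lemma hecke_p_eq_sum_slash:
  "hecke_p k t p f = (\<lambda>z. complex_of_real (real p powr (of_int k / 2 - 1)) *
     ((\<Sum>j=0..<p. slash k (hecke_alpha t p j) f z) + slash k (hecke_alpha_inf p) f z))"
  by (simp add: hecke_p_def fun_eq_iff)

lemma holomorphic_on_hecke_p:
  assumes "f holomorphic_on upper_half_plane" "p > 0"
  shows "hecke_p k t p f holomorphic_on upper_half_plane"
  unfolding hecke_p_eq_sum_slash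
  using assms by (intro holomorphic_intros holomorphic_on_slash) (auto simp: mdet_def)

locale hecke_setting =
  fixes N t p :: nat and k :: int and \<mu> :: "mat2 \<Rightarrow> complex" and f :: "complex \<Rightarrow> complex"
  assumes N: "N \<in> {1,2,3,4}"
    and multiplier: "multiplier_system (fricke_group N) \<mu>"
    and trivial_on_Gamma0MN: "\<forall>g\<in>Gamma0MN (N * t) t. \<mu> g = 1"
    and prime_p: "prime p" and p_not_dvd_N: "\<not> p dvd N" and p_square_cong: "[p ^ 2 = 1] (mod 2 * t)"
    and invariant_f: "\<forall>g\<in>fricke_group N. slash_invariant k \<mu> f g"
begin

abbreviation T :: mat2 where "T \<equiv> (1, 1, 0, 1)"
abbreviation W :: mat2 where "W \<equiv> fricke_W N"
abbreviation alpha :: "nat \<Rightarrow> mat2" where "alpha \<equiv> hecke_alpha t p"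
abbreviation alpha_inf :: mat2 where "alpha_inf \<equiv> hecke_alpha_inf p"

lemma N_pos: "N > 0" using N by auto
lemma p_pos: "p > 0" using prime_p prime_gt_0_nat by blast

lemma two_t_dvd: "2 * t dvd p^2 - 1"
  using cong_to_1_nat[OF p_square_cong] .

lemma odd_p: "odd p"
proof
  assume "even p"
  hence "even (p^2)" by simp
  moreover have "even (p^2 - 1)" using dvd_mult_left[OF two_t_dvd] .
  moreover have "p^2 \<ge> 1" using p_pos by simp
  moreover have "\<forall>x::nat. even x \<longrightarrow> even (x-1) \<longrightarrow> x \<ge> 1 \<longrightarrow> False" by presburger
  ultimately show False by blast
qed

lemma p_not_dvd_t: "\<not> p dvd t"
proof
  assume "p dvd t"
  hence "p dvd p^2 - 1" using dvd_mult_right[OF two_t_dvd] by (rule dvd_trans)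
  moreover have "p dvd p^2" by simp
  moreover have "p^2 \<ge> 1" using p_pos by simp
  ultimately have "p dvd p^2 - (p^2 - 1)" using dvd_diff_nat by blast
  hence "p dvd 1" using \<open>p^2 \<ge> 1\<close> by simp
  thus False using prime_gt_1_nat[OF prime_p] by simp
qed

definition r :: nat where "r = (p^2 - 1) div t"

lemma t_times_r: "int t * int r = int p ^ 2 - 1"
proof -
  have "t * r = p^2 - 1"
    unfolding r_def by (rule dvd_mult_div_cancel[OF dvd_mult_right[OF two_t_dvd]])
  moreover have "p^2 \<ge> 1" using p_pos by simp
  ultimately show ?thesis by (metis of_nat_1 of_nat_diff of_nat_mult of_nat_power)
qed

lemma slash_f: "g \<in> fricke_group N \<Longrightarrow> Im z > 0 \<Longrightarrow> slash k g f z = \<mu> g * f z"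
  using invariant_f by (auto simp: slash_invariant_def)

lemma f_translate_nat: "Im w > 0 \<Longrightarrow> f (w + of_nat n) = \<mu> T ^ n * f w"
proof (induction n)
  case (Suc n)
  have "f (w + of_nat (Suc n)) = f ((w + of_nat n) + 1)" by (simp add: algebra_simps)
  also have "\<dots> = \<mu> T * f (w + of_nat n)"
    using slash_f[OF translation_in_fricke_group[of 1], of "w + of_nat n"] Suc.prems
    by (simp add: slash_translation)
  finally show ?case using Suc by simp
qed simp

lemma f_translate_t: "Im w > 0 \<Longrightarrow> f (w + of_int (int t * m)) = f w"
proof -
  assume w: "Im w > 0"
  have g: "(1, of_int (int t * m), 0, 1) \<in> Gamma0MN (N * t) t"
    unfolding Gamma0MN_def by (rule CollectI, rule exI[of _ 1], rule exI[of _ "int t * m"],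
       rule exI[of _ 0], rule exI[of _ 1]) simp
  thus ?thesis
    using trivial_on_Gamma0MN Gamma0MN_subset_fricke_group slash_f[of "(1, of_int (int t * m), 0, 1)" w] w
    by (auto simp: slash_translation)
qed

text \<open>The translation \<open>z \<mapsto> z + 1\<close> permutes the \<open>\<alpha>\<^sub>j\<close> cyclically, up to a translation by a multiple
  of \<open>t\<close>: \<open>1 + t j = t h + p (p + t (q - r))\<close> with \<open>h + p q = j + (p - 1) r\<close>.\<close>
lemma f_alpha_translate:
  assumes z: "Im z > 0"
  shows "f ((z + 1 + of_nat (t * j)) / of_nat p) =
    \<mu> T ^ p * f ((z + of_nat (t * ((j + (p - 1) * r) mod p))) / of_nat p)"
proof -
  define h where "h = (j + (p - 1) * r) mod p"
  define q where "q = (j + (p - 1) * r) div p"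
  have "h + p * q = j + (p - 1) * r" unfolding h_def q_def by (rule mod_mult_div_eq)
  moreover have "int (p - 1) = int p - 1" using p_pos by simp
  ultimately have hq: "int h + int p * int q = int j + (int p - 1) * int r"
    by (metis of_nat_add of_nat_mult)
  have "1 + int t * int j = int t * int h + int p * int p + int p * (int t * (int q - int r))"
  proof -
    have "int t * int h + int p * int p + int p * (int t * (int q - int r)) =
        int t * (int h + int p * int q) + int p * int p - int p * (int t * int r)"
      by (simp add: algebra_simps)
    also have "\<dots> = 1 + int t * int j"
      unfolding hq using t_times_r by (simp add: algebra_simps power2_eq_square)
    finally show ?thesis by simp
  qed
  hence "complex_of_int (1 + int t * int j) =
      of_int (int t * int h + int p * int p + int p * (int t * (int q - int r)))"
    by simp
  hence "(1 + of_nat (t * j) :: complex) =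
      of_nat (t * h) + of_nat p * of_nat p + of_nat p * of_int (int t * (int q - int r))"
    by simp
  hence arg: "(z + 1 + of_nat (t * j)) / of_nat p =
      ((z + of_nat (t * h)) / of_nat p + of_nat p) + of_int (int t * (int q - int r))"
    using p_pos by (simp add: field_simps)
  have im: "Im ((z + of_nat (t * h)) / of_nat p) > 0" using z p_pos by simp
  have "f (((z + of_nat (t * h)) / of_nat p + of_nat p) + of_int (int t * (int q - int r))) =
      f ((z + of_nat (t * h)) / of_nat p + of_nat p)"
    using im by (intro f_translate_t) simp
  also have "\<dots> = \<mu> T ^ p * f ((z + of_nat (t * h)) / of_nat p)"
    using im by (rule f_translate_nat)
  finally show ?thesis unfolding arg h_def .
qed

lemma hecke_p_translate:
  assumes z: "Im z > 0"
  shows "hecke_p k t p f (z + 1) = \<mu> T ^ p * hecke_p k t p f z"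
proof -
  define C where "C = complex_of_real (real p powr (of_int k / 2 - 1))"
  define A where "A = complex_of_real (real p powr (of_int k / 2)) * (of_nat p) powi (- k)"
  define B where "B = complex_of_real (real p powr (of_int k / 2))"
  define h where "h j = (j + (p - 1) * r) mod p" for j
  define F where "F j = A * f ((z + of_nat (t * j)) / of_nat p)" for j
  have slash_alpha: "slash k (alpha j) f w = A * f ((w + of_nat (t * j)) / of_nat p)" for j w
    by (simp add: slash_def mdet_def A_def)
  have slash_alpha_inf: "slash k alpha_inf f w = B * f (of_nat p * w)" for w
    by (simp add: slash_def mdet_def B_def)
  have hecke_z: "hecke_p k t p f z = C * ((\<Sum>j=0..<p. F j) + B * f (of_nat p * z))"
    by (simp add: hecke_p_eq_sum_slash slash_alpha slash_alpha_inf F_def C_def)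
  have "inj_on h {0..<p}"
  proof
    fix x y assume xy: "x \<in> {0..<p}" "y \<in> {0..<p}" "h x = h y"
    hence "[x = y] (mod p)" by (simp add: h_def cong_def[symmetric] cong_add_rcancel_nat)
    thus "x = y" using xy cong_less_modulus_unique_nat by auto
  qed
  moreover have "h ` {0..<p} \<subseteq> {0..<p}" using p_pos by (auto simp: h_def)
  ultimately have "bij_betw h {0..<p} {0..<p}" by (simp add: bij_betw_def endo_inj_surj)
  hence perm: "(\<Sum>j=0..<p. \<mu> T ^ p * F (h j)) = \<mu> T ^ p * (\<Sum>j=0..<p. F j)"
    by (simp add: sum.reindex_bij_betw flip: sum_distrib_left)
  have alpha_term: "slash k (alpha j) f (z + 1) = \<mu> T ^ p * F (h j)" for j
    unfolding slash_alpha f_alpha_translate[OF z] F_def h_def by simp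
  have "f (of_nat p * (z + 1)) = f (of_nat p * z + of_nat p)" by (simp add: algebra_simps)
  also have "\<dots> = \<mu> T ^ p * f (of_nat p * z)" using z p_pos by (intro f_translate_nat) simp
  finally have "hecke_p k t p f (z + 1) =
      C * ((\<Sum>j=0..<p. \<mu> T ^ p * F (h j)) + B * (\<mu> T ^ p * f (of_nat p * z)))"
    by (simp add: hecke_p_eq_sum_slash alpha_term slash_alpha_inf C_def)
  also have "\<dots> = \<mu> T ^ p * hecke_p k t p f z"
    unfolding perm hecke_z by (simp add: algebra_simps)
  finally show ?thesis .
qed

lemma slash_W_intertwine:
  assumes b: "mdet \<beta> > 0" and b': "mdet \<beta>' > 0" and g: "\<gamma> \<in> fricke_group N"
    and eq: "mmul \<beta> W = mmul (mmul W \<gamma>) \<beta>'" and z: "Im z > 0"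
  shows "slash k W (slash k \<beta> f) z = \<mu> W * \<mu> \<gamma> * slash k \<beta>' f z"
proof -
  have dW: "mdet W > 0" using mdet_fricke_W[OF N_pos] by simp
  have Wg: "mmul W \<gamma> \<in> fricke_group N" using fricke_group.fricke g by (rule fricke_group.mult)
  have dWg: "mdet (mmul W \<gamma>) > 0" using mdet_fricke_group[OF Wg N_pos] by simp
  have "slash k W (slash k \<beta> f) z = slash k (mmul \<beta> W) f z" by (rule slash_mmul[OF b dW z])
  also have "\<dots> = slash k (mmul (mmul W \<gamma>) \<beta>') f z" unfolding eq ..
  also have "\<dots> = slash k \<beta>' (slash k (mmul W \<gamma>) f) z" by (rule slash_mmul[OF dWg b' z, symmetric])
  also have "\<dots> = slash k \<beta>' (\<lambda>w. \<mu> (mmul W \<gamma>) * f w) z"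
    by (rule slash_cong[OF b' z]) (use slash_f[OF Wg] in auto)
  also have "\<dots> = \<mu> (mmul W \<gamma>) * slash k \<beta>' f z" by (rule slash_cmult)
  also have "\<mu> (mmul W \<gamma>) = \<mu> W * \<mu> \<gamma>"
    using multiplier fricke_group.fricke g by (simp add: multiplier_system_def)
  finally show ?thesis .
qed

lemma exists_fricke_partner:
  assumes j: "j \<in> {1..<p}"
  shows "\<exists>j'. j' \<in> {1..<p} \<and> p dvd (1 + N * t^2 * j * j')"
proof -
  define a where "a = N * t^2 * j"
  have "\<not> p dvd j" using j by (auto dest: dvd_imp_le)
  hence "\<not> p dvd a" using p_not_dvd_N p_not_dvd_t prime_p unfolding a_def
    by (simp add: prime_dvd_mult_iff prime_dvd_power_iff)
  hence "coprime a p" using prime_imp_coprime[OF prime_p] by (simp add: coprime_commute)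
  then obtain x where x: "[a * x = 1] (mod p)" using cong_solve_coprime_nat by auto
  define j' where "j' = ((p - 1) * x) mod p"
  have "[1 + a * j' = 1 + a * ((p - 1) * x)] (mod p)"
    unfolding j'_def by (intro cong_add cong_mult cong_refl) (simp add: cong_def)
  also have "[1 + a * ((p - 1) * x) = 1 + (p - 1) * 1] (mod p)"
    using x by (simp only: mult.left_commute[of a]) (intro cong_add cong_mult cong_refl)
  also have "1 + (p - 1) * 1 = p" using p_pos by simp
  finally have dvd: "p dvd 1 + a * j'" unfolding cong_def by (simp add: dvd_eq_mod_eq_0)
  have "j' \<noteq> 0" using dvd prime_gt_1_nat[OF prime_p] by (cases "j' = 0") auto
  moreover have "j' < p" using p_pos by (simp add: j'_def)
  ultimately show ?thesis using dvd unfolding a_def by (intro exI[of _ j']) auto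
qed

definition fricke_partner :: "nat \<Rightarrow> nat" where
  "fricke_partner j = (SOME j'. j' \<in> {1..<p} \<and> p dvd (1 + N * t^2 * j * j'))"

lemma fricke_partner:
  "j \<in> {1..<p} \<Longrightarrow> fricke_partner j \<in> {1..<p} \<and> p dvd (1 + N * t^2 * j * fricke_partner j)"
  unfolding fricke_partner_def using exists_fricke_partner by (rule someI_ex)

lemma inj_on_fricke_partner: "inj_on fricke_partner {1..<p}"
proof -
  have "j1 = j2" if j: "j1 \<in> {1..<p}" "j2 \<in> {1..<p}" "fricke_partner j1 = fricke_partner j2" "j2 \<le> j1"
    for j1 j2
  proof -
    define j' where "j' = fricke_partner j1"
    have d1: "p dvd 1 + N * t^2 * j1 * j'" using fricke_partner[OF j(1)] by (simp add: j'_def)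
    have d2: "p dvd 1 + N * t^2 * j2 * j'" using fricke_partner[OF j(2)] j(3) by (simp add: j'_def)
    have "p dvd (1 + N * t^2 * j1 * j') - (1 + N * t^2 * j2 * j')" using d1 d2 by (rule dvd_diff_nat)
    also have "(1 + N * t^2 * j1 * j') - (1 + N * t^2 * j2 * j') = (N * t^2 * j') * (j1 - j2)"
      using j(4) by (simp add: algebra_simps diff_mult_distrib2)
    finally have dv: "p dvd (N * t^2 * j') * (j1 - j2)" .
    have "\<not> p dvd j'" using fricke_partner[OF j(1)] by (auto simp: j'_def dest: dvd_imp_le)
    hence "\<not> p dvd N * t^2 * j'"
      using p_not_dvd_N p_not_dvd_t prime_p by (simp add: prime_dvd_mult_iff prime_dvd_power_iff)
    hence "p dvd j1 - j2" using dv prime_p by (simp add: prime_dvd_mult_iff)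
    moreover have "j1 - j2 < p" using j by auto
    ultimately have "j1 - j2 = 0" by (metis dvd_imp_le not_less neq0_conv)
    thus ?thesis using j(4) by simp
  qed
  thus ?thesis unfolding inj_on_def by (metis nat_le_linear)
qed

text \<open>With \<open>j' = fricke_partner j\<close> and \<open>p D = 1 + N t\<^sup>2 j j'\<close>, one has
  \<open>\<alpha>\<^sub>j W\<^sub>N = W\<^sub>N \<gamma> \<alpha>\<^sub>j\<^sub>'\<close> for \<open>\<gamma> = (p, -t j'; -N t j, D) \<in> \<Gamma>\<^sub>0(N t, t)\<close>.\<close>
lemma alpha_mmul_W:
  assumes j: "j \<in> {1..<p}"
  shows "\<exists>\<gamma>. \<gamma> \<in> Gamma0MN (N * t) t \<and> mmul (alpha j) W = mmul (mmul W \<gamma>) (alpha (fricke_partner j))"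
proof -
  define j' where "j' = fricke_partner j"
  have dv: "p dvd (1 + N * t^2 * j * j')" using fricke_partner[OF j] by (simp add: j'_def)
  define D where "D = (1 + N * t^2 * j * j') div p"
  have pD: "p * D = 1 + N * t^2 * j * j'" unfolding D_def using dv by simp
  have pDi: "int p * int D - (- (int t * int j')) * (- (int N * int t * int j)) = 1"
    using arg_cong[OF pD, of int] by (simp add: algebra_simps power2_eq_square)
  define \<gamma> where "\<gamma> = (real p, - (real t * real j'), - (real N * real t * real j), real D)"
  have "\<gamma> \<in> Gamma0MN (N * t) t"
    unfolding Gamma0MN_def \<gamma>_def
    by (rule CollectI, rule exI[of _ "int p"], rule exI[of _ "- (int t * int j')"],
       rule exI[of _ "- (int N * int t * int j)"], rule exI[of _ "int D"]) (use pDi in simp)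
  moreover have "mmul (alpha j) W = mmul (mmul W \<gamma>) (alpha j')"
  proof -
    define s where "s = sqrt (real N)"
    have s: "s > 0" "real N = s * s" using N_pos by (simp_all add: s_def)
    have "real p * real D = 1 + s * s * real t ^ 2 * real j * real j'"
      using arg_cong[OF pD, of real] s by simp
    thus ?thesis
      unfolding fricke_W_def s_def[symmetric] \<gamma>_def s(2)
      using s by (simp add: mmul_def field_simps power2_eq_square)
  qed
  ultimately show ?thesis unfolding j'_def by blast
qed

lemma hecke_p_slash_W:
  assumes z: "Im z > 0"
  shows "slash k W (hecke_p k t p f) z = \<mu> W * hecke_p k t p f z"
proof -
  define C where "C = complex_of_real (real p powr (of_int k / 2 - 1))"
  have det_alpha: "mdet (alpha j) > 0" and det_alpha_inf: "mdet alpha_inf > 0" for j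
    using p_pos by (simp_all add: mdet_def)
  have \<mu>_id: "\<mu> id_mat = 1" using multiplier_system_id[OF multiplier id_mat_in_fricke_group] .
  have W_id: "mmul W id_mat = W" by (simp add: mmul_def fricke_W_def)
  have s0: "slash k W (slash k (alpha 0) f) z = \<mu> W * slash k alpha_inf f z"
  proof -
    have "mmul (alpha 0) W = mmul (mmul W id_mat) alpha_inf" unfolding W_id by (simp add: mmul_def fricke_W_def)
    from slash_W_intertwine[OF det_alpha det_alpha_inf id_mat_in_fricke_group this z]
    show ?thesis using \<mu>_id by simp
  qed
  have s_inf: "slash k W (slash k alpha_inf f) z = \<mu> W * slash k (alpha 0) f z"
  proof -
    have "mmul alpha_inf W = mmul (mmul W id_mat) (alpha 0)" unfolding W_id by (simp add: mmul_def fricke_W_def)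
    from slash_W_intertwine[OF det_alpha_inf det_alpha id_mat_in_fricke_group this z]
    show ?thesis using \<mu>_id by simp
  qed
  have sj: "slash k W (slash k (alpha j) f) z = \<mu> W * slash k (alpha (fricke_partner j)) f z"
    if j: "j \<in> {1..<p}" for j
  proof -
    obtain \<gamma> where g: "\<gamma> \<in> Gamma0MN (N * t) t"
      "mmul (alpha j) W = mmul (mmul W \<gamma>) (alpha (fricke_partner j))"
      using alpha_mmul_W[OF j] by blast
    have "\<mu> \<gamma> = 1" using trivial_on_Gamma0MN g(1) by blast
    moreover have "\<gamma> \<in> fricke_group N" using g(1) Gamma0MN_subset_fricke_group by blast
    ultimately show ?thesis using slash_W_intertwine[OF det_alpha det_alpha _ g(2) z] by simp
  qed
  have "fricke_partner ` {1..<p} \<subseteq> {1..<p}" using fricke_partner by auto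
  hence "bij_betw fricke_partner {1..<p} {1..<p}"
    using inj_on_fricke_partner by (simp add: bij_betw_def endo_inj_surj)
  hence perm: "(\<Sum>j=1..<p. slash k (alpha (fricke_partner j)) f z) = (\<Sum>j=1..<p. slash k (alpha j) f z)"
    by (rule sum.reindex_bij_betw)
  have split: "(\<Sum>j=0..<p. G j) = G 0 + (\<Sum>j=1..<p. G j)" for G :: "nat \<Rightarrow> complex"
    using sum.atLeast_Suc_lessThan[OF p_pos, of G] by simp
  have "slash k W (hecke_p k t p f) z =
      C * ((\<Sum>j=0..<p. slash k W (slash k (alpha j) f) z) + slash k W (slash k alpha_inf f) z)"
    unfolding hecke_p_eq_sum_slash slash_cmult slash_add slash_sum C_def ..
  also have "(\<Sum>j=0..<p. slash k W (slash k (alpha j) f) z) =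
      \<mu> W * slash k alpha_inf f z + (\<Sum>j=1..<p. \<mu> W * slash k (alpha (fricke_partner j)) f z)"
    unfolding split s0 using sj by simp
  also have "C * (\<mu> W * slash k alpha_inf f z + (\<Sum>j=1..<p. \<mu> W * slash k (alpha (fricke_partner j)) f z) +
      slash k W (slash k alpha_inf f) z) =
      \<mu> W * (C * ((slash k (alpha 0) f z + (\<Sum>j=1..<p. slash k (alpha j) f z)) + slash k alpha_inf f z))"
    unfolding s_inf sum_distrib_left[symmetric] perm by (simp add: algebra_simps)
  also have "\<dots> = \<mu> W * hecke_p k t p f z" unfolding hecke_p_eq_sum_slash split C_def ..
  finally show ?thesis .
qed

lemma multiplier_power_W: "\<mu> W ^ p = \<mu> W"
proof -
  have "(-1::real, 0::real, 0::real, -1::real) \<in> Gamma0MN (N * t) t"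
    unfolding Gamma0MN_def
    by (rule CollectI, rule exI[of _ "-1"], rule exI[of _ 0], rule exI[of _ 0], rule exI[of _ "-1"]) simp
  hence "\<mu> (mmul W W) = 1" using trivial_on_Gamma0MN fricke_W_square[OF N_pos] by simp
  hence sq: "\<mu> W ^ 2 = 1" using multiplier fricke_group.fricke
    by (simp add: multiplier_system_def power2_eq_square)
  obtain m where m: "p = 2 * m + 1" using odd_p oddE by blast
  have "\<mu> W ^ p = (\<mu> W ^ 2) ^ m * \<mu> W" unfolding m by (simp add: power_mult power_add)
  thus ?thesis using sq by simp
qed

lemma hecke_p_invariant:
  assumes "g \<in> fricke_group N"
  shows "slash_invariant k (\<lambda>g. \<mu> g ^ p) (hecke_p k t p f) g"
proof -
  have "fricke_generators_invariant N k (\<lambda>g. \<mu> g ^ p) (hecke_p k t p f)"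
  proof
    show "multiplier_system (fricke_group N) (\<lambda>g. \<mu> g ^ p)"
      using multiplier unfolding multiplier_system_def by (simp add: norm_power power_mult_distrib)
    show "slash_invariant k (\<lambda>g. \<mu> g ^ p) (hecke_p k t p f) T"
      using hecke_p_translate by (simp add: slash_invariant_def slash_translation)
    show "slash_invariant k (\<lambda>g. \<mu> g ^ p) (hecke_p k t p f) W"
      using hecke_p_slash_W multiplier_power_W by (simp add: slash_invariant_def)
  qed (rule N)
  thus ?thesis using assms by (rule fricke_generators_invariant.invariant_fricke_group)
qed

end

section \<open>Expansions at the cusp \<open>\<infinity>\<close>\<close>

text \<open>For an \<open>h\<close>-periodic \<open>R\<close>, \<open>q_expansion h R\<close> is \<open>R\<close> as a function of \<open>q = e\<^sup>2\<^sup>\<pi>\<^sup>i\<^sup>z\<^sup>/\<^sup>h\<close>, the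
  branch of the logarithm being irrelevant by periodicity.\<close>
definition q_expansion :: "nat \<Rightarrow> (complex \<Rightarrow> complex) \<Rightarrow> complex \<Rightarrow> complex" where
  "q_expansion h R q = R (of_nat h * Ln q / (2 * of_real pi * \<i>))"

definition periodic_uhp :: "nat \<Rightarrow> (complex \<Rightarrow> complex) \<Rightarrow> bool" where
  "periodic_uhp h R \<longleftrightarrow> (\<forall>z\<in>upper_half_plane. R (z + of_nat h) = R z)"

definition has_cusp_expansion :: "nat \<Rightarrow> (complex \<Rightarrow> complex) \<Rightarrow> bool" where
  "has_cusp_expansion h R \<longleftrightarrow> h > 0 \<and> R holomorphic_on upper_half_plane \<and> periodic_uhp h R \<and>
     q_expansion h R meromorphic_on {0}"

lemma Im_div_2pi_i: "Im (x / (2 * of_real pi * \<i>)) = - Re x / (2 * pi)"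
  by (simp add: Im_divide power2_eq_square)

lemma Im_q_argument_pos:
  assumes "h > 0" "q \<noteq> 0" "norm q < 1"
  shows "Im (of_nat h * Ln q / (2 * of_real pi * \<i>)) > 0"
proof -
  have "ln (norm q) < 0" using assms by simp
  hence "Re (of_nat h * Ln q) < 0" using assms by (simp add: Re_Ln mult_pos_neg)
  thus ?thesis unfolding Im_div_2pi_i by (simp add: divide_neg_pos)
qed

lemma periodic_uhp_nat:
  assumes "periodic_uhp h R" "Im z > 0"
  shows "R (z + of_nat h * of_nat n) = R z"
proof (induction n)
  case (Suc n)
  have "R (z + of_nat h * of_nat (Suc n)) = R ((z + of_nat h * of_nat n) + of_nat h)"
    by (simp add: algebra_simps)
  also have "\<dots> = R (z + of_nat h * of_nat n)"
    using assms by (auto simp: periodic_uhp_def upper_half_plane_def)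
  finally show ?case using Suc by simp
qed simp

lemma periodic_uhp_int:
  assumes "periodic_uhp h R" "Im z > 0"
  shows "R (z + of_nat h * of_int m) = R z"
proof (cases "m \<ge> 0")
  case True
  then obtain n where "m = int n" using nonneg_int_cases by blast
  thus ?thesis using periodic_uhp_nat[OF assms] by simp
next
  case False
  define n where "n = nat (-m)"
  have m: "m = - int n" using False by (simp add: n_def)
  have "R ((z + of_nat h * of_int m) + of_nat h * of_nat n) = R (z + of_nat h * of_int m)"
    using assms by (intro periodic_uhp_nat) (auto simp: m)
  thus ?thesis by (simp add: m)
qed

lemma q_expansion_exp:
  assumes "h > 0" "periodic_uhp h R" "Im z > 0"
  shows "q_expansion h R (exp (2 * of_real pi * \<i> * z / of_nat h)) = R z"
proof -
  define v where "v = 2 * of_real pi * \<i> * z / of_nat h"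
  have "exp (Ln (exp v)) = exp v" by simp
  then obtain n :: int where "Ln (exp v) = v + of_int (2 * n) * pi * \<i>" using exp_eq by blast
  hence "of_nat h * Ln (exp v) / (2 * of_real pi * \<i>) = z + of_nat h * of_int n"
    using assms(1) by (simp add: v_def field_simps)
  thus ?thesis unfolding q_expansion_def v_def using periodic_uhp_int[OF assms(2,3)] by simp
qed

text \<open>\<open>Ln\<close> is holomorphic off the non-positive reals; on the punctured disc minus the non-negative
  reals one uses instead the branch \<open>Ln (-q) + i\<pi>\<close>, which differs from \<open>Ln q\<close> by a multiple of
  \<open>2\<pi>i\<close>.\<close>
lemma holomorphic_on_q_expansion:
  assumes h: "h > 0" and R_holo: "R holomorphic_on upper_half_plane" and R_per: "periodic_uhp h R"
  shows "q_expansion h R holomorphic_on (ball 0 1 - {0})"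
proof -
  define S1 where "S1 = ball 0 1 - {0} - (\<real>\<^sub>\<le>\<^sub>0 :: complex set)"
  define S2 where "S2 = ball 0 1 - {0} - (\<real>\<^sub>\<ge>\<^sub>0 :: complex set)"
  define L1 where "L1 q = of_nat h * Ln q / (2 * of_real pi * \<i>)" for q
  define L2 where "L2 q = of_nat h * (Ln (-q) + \<i> * of_real pi) / (2 * of_real pi * \<i>)" for q
  have "q = 0" if "q \<in> \<real>\<^sub>\<le>\<^sub>0" "q \<in> \<real>\<^sub>\<ge>\<^sub>0" for q :: complex
    using that by (auto simp: complex_nonpos_Reals_iff complex_nonneg_Reals_iff complex_eq_iff)
  hence cover: "ball 0 1 - {0} = S1 \<union> S2" unfolding S1_def S2_def by blast
  have "L1 holomorphic_on S1" unfolding L1_def by (intro holomorphic_intros) (auto simp: S1_def)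
  moreover have "L1 ` S1 \<subseteq> upper_half_plane"
    using Im_q_argument_pos[OF h] by (auto simp: S1_def L1_def upper_half_plane_def)
  ultimately have "(\<lambda>q. R (L1 q)) holomorphic_on S1"
    using holomorphic_on_compose_gen[OF _ R_holo] by (simp add: o_def)
  moreover have "q_expansion h R = (\<lambda>q. R (L1 q))" by (simp add: fun_eq_iff q_expansion_def L1_def)
  ultimately have hol1: "q_expansion h R holomorphic_on S1" by simp
  have ImL2: "Im (L2 q) > 0" if "q \<noteq> 0" "norm q < 1" for q
  proof -
    have "Re (Ln (-q) + \<i> * of_real pi) = ln (norm q)" using that by (simp add: Re_Ln)
    moreover have "ln (norm q) < 0" using that by simp
    ultimately have "Re (of_nat h * (Ln (-q) + \<i> * of_real pi)) < 0" using h by (simp add: mult_pos_neg)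
    thus ?thesis unfolding L2_def Im_div_2pi_i by (simp add: divide_neg_pos)
  qed
  have "(\<lambda>q. Ln (-q)) holomorphic_on S2"
    by (rule holomorphic_on_Ln')
       (auto simp: S2_def complex_nonpos_Reals_iff complex_nonneg_Reals_iff intro: holomorphic_intros)
  hence "L2 holomorphic_on S2" unfolding L2_def by (intro holomorphic_intros) (auto simp: S2_def)
  moreover have "L2 ` S2 \<subseteq> upper_half_plane" using ImL2 by (auto simp: S2_def upper_half_plane_def)
  ultimately have hol2': "(\<lambda>q. R (L2 q)) holomorphic_on S2"
    using holomorphic_on_compose_gen[OF _ R_holo] by (simp add: o_def)
  have "q_expansion h R q = R (L2 q)" if "q \<noteq> 0" "norm q < 1" for q
  proof -
    have "exp (Ln q) = exp (Ln (-q) + \<i> * of_real pi)" using that by (simp add: exp_add)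
    then obtain n :: int where n: "Ln q = Ln (-q) + \<i> * of_real pi + of_int (2 * n) * pi * \<i>"
      using exp_eq by blast
    have "of_nat h * Ln q / (2 * of_real pi * \<i>) = L2 q + of_nat h * of_int n"
      unfolding n L2_def by (simp add: field_simps)
    thus ?thesis unfolding q_expansion_def using periodic_uhp_int[OF R_per ImL2[OF that]] by simp
  qed
  hence hol2: "q_expansion h R holomorphic_on S2"
    by (intro holomorphic_transform[OF hol2']) (auto simp: S2_def)
  show ?thesis unfolding cover
    by (rule holomorphic_on_Un[OF hol1 hol2]) (auto simp: S1_def S2_def intro!: open_Diff)
qed

lemma has_cusp_expansion_iff_not_essential:
  assumes "h > 0" "R holomorphic_on upper_half_plane" "periodic_uhp h R"
  shows "has_cusp_expansion h R \<longleftrightarrow> not_essential (q_expansion h R) 0"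
proof -
  have "isolated_singularity_at (q_expansion h R) 0"
    by (rule isolated_singularity_at_holomorphic[where s = "ball 0 1"])
       (use holomorphic_on_q_expansion[OF assms] in auto)
  thus ?thesis using assms by (simp add: has_cusp_expansion_def meromorphic_at_iff)
qed

lemma eventually_at_0_punctured_disc: "eventually (\<lambda>q. q \<noteq> 0 \<and> norm q < 1) (at (0::complex))"
  unfolding eventually_at by (intro exI[of _ 1]) (auto simp: dist_norm)

lemma has_cusp_expansion_cong:
  assumes R1: "has_cusp_expansion h R1" and eq: "\<And>z. Im z > 0 \<Longrightarrow> R1 z = R2 z"
  shows "has_cusp_expansion h R2"
proof -
  have h: "h > 0" using R1 by (simp add: has_cusp_expansion_def)
  have "R2 holomorphic_on upper_half_plane"
  proof (rule holomorphic_transform[of R1])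
    show "R1 holomorphic_on upper_half_plane" using R1 by (simp add: has_cusp_expansion_def)
  qed (use eq in \<open>simp add: upper_half_plane_def\<close>)
  moreover have "periodic_uhp h R2"
    unfolding periodic_uhp_def
  proof
    fix z assume "z \<in> upper_half_plane"
    hence z: "Im z > 0" by (simp add: upper_half_plane_def)
    have "R1 (z + of_nat h) = R1 z"
      using R1 z by (auto simp: has_cusp_expansion_def periodic_uhp_def upper_half_plane_def)
    moreover have "R1 (z + of_nat h) = R2 (z + of_nat h)" using z by (intro eq) simp
    ultimately show "R2 (z + of_nat h) = R2 z" using eq[OF z] by simp
  qed
  moreover have "eventually (\<lambda>q. q_expansion h R1 q = q_expansion h R2 q) (at 0)"
    using eventually_at_0_punctured_disc
    by eventually_elim (use Im_q_argument_pos[OF h] eq in \<open>simp add: q_expansion_def\<close>)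
  hence "q_expansion h R2 meromorphic_on {0}"
    using R1 meromorphic_on_cong[of "{0}" "q_expansion h R1" "q_expansion h R2" "{0}"]
    by (simp add: has_cusp_expansion_def)
  ultimately show ?thesis using h by (simp add: has_cusp_expansion_def)
qed

lemma has_cusp_expansion_add:
  assumes "has_cusp_expansion h R1" "has_cusp_expansion h R2"
  shows "has_cusp_expansion h (\<lambda>z. R1 z + R2 z)"
proof -
  have "q_expansion h (\<lambda>z. R1 z + R2 z) = (\<lambda>q. q_expansion h R1 q + q_expansion h R2 q)"
    by (simp add: q_expansion_def fun_eq_iff)
  thus ?thesis using assms unfolding has_cusp_expansion_def periodic_uhp_def
    by (auto intro!: holomorphic_intros meromorphic_intros)
qed

lemma has_cusp_expansion_cmult:
  assumes "has_cusp_expansion h R"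
  shows "has_cusp_expansion h (\<lambda>z. c * R z)"
proof -
  have "q_expansion h (\<lambda>z. c * R z) = (\<lambda>q. c * q_expansion h R q)"
    by (simp add: q_expansion_def fun_eq_iff)
  thus ?thesis using assms unfolding has_cusp_expansion_def periodic_uhp_def
    by (auto intro!: holomorphic_intros meromorphic_intros)
qed

text \<open>Under \<open>z \<mapsto> (g z + b) / d\<close> the variable \<open>q\<^sub>h\<close> becomes \<open>\<zeta> q\<^sub>H\<^sup>e\<close> for a root of unity
  \<open>\<zeta>\<close>, and meromorphy at \<open>0\<close> is preserved by this substitution.\<close>
lemma has_cusp_expansion_affine:
  fixes g d e H :: nat and b :: real
  assumes Q: "has_cusp_expansion h Q" and g: "g > 0" and d: "d > 0" and e: "e > 0" and H: "H > 0"
    and rel: "g * H = e * d * h"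
  shows "has_cusp_expansion H (\<lambda>z. Q ((of_nat g * z + of_real b) / of_nat d))"
proof -
  have h: "h > 0" and Q_holo: "Q holomorphic_on upper_half_plane" and Q_per: "periodic_uhp h Q"
    and Q_mero: "q_expansion h Q meromorphic_on {0}" using Q by (auto simp: has_cusp_expansion_def)
  define A where "A z = (of_nat g * z + of_real b) / (of_nat d :: complex)" for z
  have ImA: "Im (A z) > 0" if "Im z > 0" for z using that g d by (simp add: A_def)
  have rel_complex: "of_nat g * of_nat H / of_nat d = (of_nat h * of_nat e :: complex)"
  proof -
    have "(of_nat (g * H) :: complex) = of_nat (e * d * h)" using rel by simp
    thus ?thesis using d by (simp add: field_simps)
  qed
  have hol: "(\<lambda>z. Q (A z)) holomorphic_on upper_half_plane"
  proof -
    have "A holomorphic_on upper_half_plane" unfolding A_def using d by (intro holomorphic_intros) auto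
    moreover have "A ` upper_half_plane \<subseteq> upper_half_plane" using ImA by (auto simp: upper_half_plane_def)
    ultimately show ?thesis using holomorphic_on_compose_gen[OF _ Q_holo] by (simp add: o_def)
  qed
  have per: "periodic_uhp H (\<lambda>z. Q (A z))"
    unfolding periodic_uhp_def
  proof
    fix z assume "z \<in> upper_half_plane"
    hence z: "Im z > 0" by (simp add: upper_half_plane_def)
    have "A (z + of_nat H) = A z + of_nat h * of_nat e"
      unfolding A_def rel_complex[symmetric] using d by (simp add: field_simps)
    thus "Q (A (z + of_nat H)) = Q (A z)" using periodic_uhp_nat[OF Q_per ImA[OF z]] by simp
  qed
  define \<zeta> where "\<zeta> = exp (2 * of_real pi * \<i> * of_real b / (of_nat d * of_nat h))"
  have ev: "eventually (\<lambda>q. q_expansion H (\<lambda>z. Q (A z)) q = q_expansion h Q (\<zeta> * q ^ e)) (at 0)"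
    using eventually_at_0_punctured_disc
  proof eventually_elim
    case (elim q)
    define w where "w = of_nat H * Ln q / (2 * of_real pi * \<i>)"
    have w: "Im w > 0" using Im_q_argument_pos[OF H] elim by (simp add: w_def)
    have "2 * of_real pi * \<i> * A w / of_nat h = of_nat e * Ln q + 2 * of_real pi * \<i> * of_real b / (of_nat d * of_nat h)"
    proof -
      have "2 * of_real pi * \<i> * A w / of_nat h = (of_nat g * of_nat H / of_nat d) * Ln q / of_nat h +
          2 * of_real pi * \<i> * of_real b / (of_nat d * of_nat h)"
        unfolding A_def w_def using d h by (simp add: field_simps)
      also have "\<dots> = of_nat e * Ln q + 2 * of_real pi * \<i> * of_real b / (of_nat d * of_nat h)"
        unfolding rel_complex using h by simp
      finally show ?thesis .
    qed
    hence "exp (2 * of_real pi * \<i> * A w / of_nat h) = \<zeta> * q ^ e"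
      using elim by (simp add: exp_add exp_of_nat_mult \<zeta>_def mult.commute)
    hence "q_expansion h Q (\<zeta> * q ^ e) = Q (A w)" using q_expansion_exp[OF h Q_per ImA[OF w]] by simp
    thus ?case by (simp add: q_expansion_def w_def)
  qed
  have "(\<lambda>q. q_expansion h Q (\<zeta> * q ^ e)) meromorphic_on {0}"
    by (rule meromorphic_on_compose[OF Q_mero]) (use e in \<open>auto intro!: analytic_intros\<close>)
  hence "q_expansion H (\<lambda>z. Q (A z)) meromorphic_on {0}"
    using meromorphic_on_cong[of "{0}" "q_expansion H (\<lambda>z. Q (A z))" "\<lambda>q. q_expansion h Q (\<zeta> * q ^ e)" "{0}"] ev by simp
  thus ?thesis using hol per H unfolding has_cusp_expansion_def A_def by simp
qed

lemma has_cusp_expansion_multiple: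
  assumes "has_cusp_expansion h R" "e > 0"
  shows "has_cusp_expansion (h * e) R"
proof -
  have "h > 0" using assms by (simp add: has_cusp_expansion_def)
  thus ?thesis
    using has_cusp_expansion_affine[OF assms(1), of 1 1 e "h * e" 0] assms(2) by simp
qed

lemma has_cusp_expansion_common_period:
  assumes "has_cusp_expansion h1 R1" "has_cusp_expansion h2 R2"
  shows "has_cusp_expansion (h1 * h2) R1 \<and> has_cusp_expansion (h1 * h2) R2"
proof -
  have "h1 > 0" "h2 > 0" using assms by (auto simp: has_cusp_expansion_def)
  thus ?thesis using has_cusp_expansion_multiple[OF assms(1), of h2]
      has_cusp_expansion_multiple[OF assms(2), of h1] by (simp add: mult.commute)
qed

lemma has_cusp_expansion_sum:
  assumes "finite I" "\<And>i. i \<in> I \<Longrightarrow> \<exists>h. has_cusp_expansion h (R i)"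
  shows "\<exists>h. has_cusp_expansion h (\<lambda>z. \<Sum>i\<in>I. R i z)"
  using assms
proof (induction I rule: finite_induct)
  case empty
  have "has_cusp_expansion 1 (\<lambda>z. 0)"
    unfolding has_cusp_expansion_def periodic_uhp_def q_expansion_def
    by (auto intro!: holomorphic_intros meromorphic_intros)
  thus ?case by auto
next
  case (insert i I)
  obtain h1 where h1: "has_cusp_expansion h1 (R i)" using insert.prems by blast
  obtain h2 where h2: "has_cusp_expansion h2 (\<lambda>z. \<Sum>i\<in>I. R i z)" using insert by blast
  have "has_cusp_expansion (h1 * h2) (\<lambda>z. R i z + (\<Sum>i\<in>I. R i z))"
    using has_cusp_expansion_common_period[OF h1 h2] by (intro has_cusp_expansion_add) auto
  thus ?case using insert.hyps by auto
qed

section \<open>Behaviour of \<open>T\<^sub>k\<^sup>(\<^sup>t\<^sup>)(p)\<close> at the cusps\<close>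

lemma mdet_SL2Z: "\<sigma> \<in> SL2Z \<Longrightarrow> mdet \<sigma> = 1"
  unfolding SL2Z_def by (rule mdet_Gamma0MN)

lemma meromorphic_at_cusps_iff:
  assumes "F holomorphic_on upper_half_plane"
  shows "meromorphic_at_cusps k F \<longleftrightarrow> (\<forall>\<sigma>\<in>SL2Z. \<exists>h. has_cusp_expansion h (slash k \<sigma> F))"
proof -
  have "has_cusp_expansion h (slash k \<sigma> F) \<longleftrightarrow> h > 0 \<and> periodic_uhp h (slash k \<sigma> F) \<and>
      not_essential (q_expansion h (slash k \<sigma> F)) 0" if "\<sigma> \<in> SL2Z" for h \<sigma>
  proof (cases "h > 0 \<and> periodic_uhp h (slash k \<sigma> F)")
    case True
    have "slash k \<sigma> F holomorphic_on upper_half_plane"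
      using holomorphic_on_slash[OF assms] mdet_SL2Z[OF that] by simp
    thus ?thesis using True has_cusp_expansion_iff_not_essential by blast
  qed (auto simp: has_cusp_expansion_def)
  thus ?thesis
    unfolding meromorphic_at_cusps_def periodic_uhp_def q_expansion_def[abs_def] by (auto 4 3)
qed

lemma SL2Z_upper_triangular_decomposition:
  fixes m1 m2 m3 m4 :: int
  assumes P: "m1 * m4 - m2 * m3 = P" "P > 0"
  shows "\<exists>\<sigma> g b d. \<sigma> \<in> SL2Z \<and> g > 0 \<and> d > 0 \<and> g * d = P \<and>
     (of_int m1, of_int m2, of_int m3, of_int m4) = mmul \<sigma> (of_int g, of_int b, 0, of_int d)"
proof -
  define g0 where "g0 = gcd m1 m3"
  have "m1 \<noteq> 0 \<or> m3 \<noteq> 0" using P by auto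
  hence g0: "g0 > 0" by (simp add: g0_def)
  obtain x y where xy: "x * m1 + y * m3 = g0" using bezout_int unfolding g0_def by blast
  obtain u1 where u1: "m1 = g0 * u1" unfolding g0_def by (meson dvdE gcd_dvd1)
  obtain u3 where u3: "m3 = g0 * u3" unfolding g0_def by (meson dvdE gcd_dvd2)
  have det1: "u1 * x - (-y) * u3 = 1"
  proof -
    have "g0 * (u1 * x + y * u3) = g0 * 1" using xy u1 u3 by (simp add: algebra_simps)
    thus ?thesis using g0 by simp
  qed
  define d where "d = u1 * m4 - m2 * u3"
  define b where "b = x * m2 + y * m4"
  have gd: "g0 * d = P" using P u1 u3 by (simp add: d_def algebra_simps)
  have d0: "d > 0" using gd g0 P by (metis pos_imp_zdiv_pos_iff zero_less_mult_pos)
  have e2: "u1 * b - y * d = m2"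
  proof -
    have "u1 * b - y * d = m2 * (u1 * x + y * u3)" by (simp add: b_def d_def algebra_simps)
    thus ?thesis using det1 by simp
  qed
  have e4: "u3 * b + x * d = m4"
  proof -
    have "u3 * b + x * d = m4 * (u1 * x + y * u3)" by (simp add: b_def d_def algebra_simps)
    thus ?thesis using det1 by simp
  qed
  define \<sigma> :: mat2 where "\<sigma> = (of_int u1, of_int (-y), of_int u3, of_int x)"
  have "\<sigma> \<in> SL2Z" unfolding SL2Z_def Gamma0MN_def \<sigma>_def
    by (rule CollectI, rule exI[of _ u1], rule exI[of _ "-y"], rule exI[of _ u3], rule exI[of _ x]) (use det1 in simp)
  moreover have "(of_int m1, of_int m2, of_int m3, of_int m4) = mmul \<sigma> (of_int g0, of_int b, 0, of_int d)"
  proof -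
    have "real_of_int m2 = of_int (u1 * b - y * d)" using e2 by simp
    moreover have "real_of_int m4 = of_int (u3 * b + x * d)" using e4 by simp
    ultimately show ?thesis unfolding \<sigma>_def mmul_def using u1 u3 by (simp add: algebra_simps)
  qed
  ultimately show ?thesis using g0 d0 gd by blast
qed

text \<open>Every integer matrix of positive determinant is \<open>\<sigma> (g, b; 0, d)\<close> with \<open>\<sigma> \<in> SL\<^sub>2(\<int>)\<close>, so
  slashing by it amounts to an affine substitution in an expansion of \<open>f\<close> at a cusp.\<close>
lemma has_cusp_expansion_slash_integer_matrix:
  fixes m1 m2 m3 m4 :: int
  assumes f_holo: "f holomorphic_on upper_half_plane" and f_cusps: "meromorphic_at_cusps k f"
    and det: "m1 * m4 - m2 * m3 > 0"
  shows "\<exists>h. has_cusp_expansion h (slash k (of_int m1, of_int m2, of_int m3, of_int m4) f)"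
proof -
  obtain \<sigma> g b d where \<sigma>: "\<sigma> \<in> SL2Z" and pos: "g > 0" "d > 0"
    and M: "(of_int m1, of_int m2, of_int m3, of_int m4) = mmul \<sigma> (of_int g, of_int b, 0, of_int d)"
    using SL2Z_upper_triangular_decomposition[OF refl det] by blast
  obtain h where h: "has_cusp_expansion h (slash k \<sigma> f)"
    using f_cusps \<sigma> meromorphic_at_cusps_iff[OF f_holo] by blast
  have "h > 0" using h by (simp add: has_cusp_expansion_def)
  hence "has_cusp_expansion (h * nat d) (\<lambda>z. slash k \<sigma> f ((of_nat (nat g) * z + of_real (of_int b)) / of_nat (nat d)))"
    using pos by (intro has_cusp_expansion_affine[OF h, of _ _ "nat g"]) auto
  hence expansion: "has_cusp_expansion (h * nat d) (\<lambda>z. complex_of_real (mdet (of_int g, of_int b, 0, of_int d) powr (of_int k / 2)) *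
      of_int d powi (-k) * slash k \<sigma> f ((of_nat (nat g) * z + of_real (of_int b)) / of_nat (nat d)))"
    by (rule has_cusp_expansion_cmult)
  have eq: "slash k (of_int m1, of_int m2, of_int m3, of_int m4) f z =
      complex_of_real (mdet (of_int g, of_int b, 0, of_int d) powr (of_int k / 2)) *
      of_int d powi (-k) * slash k \<sigma> f ((of_nat (nat g) * z + of_real (of_int b)) / of_nat (nat d))"
    if "Im z > 0" for z
  proof -
    have "mdet \<sigma> > 0" "mdet (of_int g, of_int b, 0, of_int d) > 0"
      using mdet_SL2Z[OF \<sigma>] pos by (simp_all add: mdet_def)
    hence "slash k (of_int m1, of_int m2, of_int m3, of_int m4) f z =
        slash k (of_int g, of_int b, 0, of_int d) (slash k \<sigma> f) z"
      unfolding M using slash_mmul that by simp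
    thus ?thesis using pos by (simp add: slash_def)
  qed
  have "has_cusp_expansion (h * nat d) (slash k (of_int m1, of_int m2, of_int m3, of_int m4) f)"
    by (rule has_cusp_expansion_cong[OF expansion]) (simp add: eq)
  thus ?thesis by blast
qed

lemma meromorphic_at_cusps_hecke_p:
  assumes p: "p > 0" and f_holo: "f holomorphic_on upper_half_plane"
    and f_cusps: "meromorphic_at_cusps k f"
  shows "meromorphic_at_cusps k (hecke_p k t p f)"
proof -
  define \<beta> where "\<beta> j = (if j < p then hecke_alpha t p j else hecke_alpha_inf p)" for j
  define C where "C = complex_of_real (real p powr (of_int k / 2 - 1))"
  have hecke_eq: "hecke_p k t p f z = C * (\<Sum>j\<in>{0..p}. slash k (\<beta> j) f z)" for z
  proof -
    have "{0..p} = insert p {0..<p}" by auto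
    thus ?thesis by (simp add: hecke_p_def C_def \<beta>_def add.commute)
  qed
  have "\<exists>h. has_cusp_expansion h (slash k \<sigma> (hecke_p k t p f))" if \<sigma>: "\<sigma> \<in> SL2Z" for \<sigma>
  proof -
    obtain a b c d :: int where \<sigma>_eq: "\<sigma> = (of_int a, of_int b, of_int c, of_int d)" and det: "a*d - b*c = 1"
      using \<sigma> unfolding SL2Z_def Gamma0MN_def by blast
    have each: "\<exists>h. has_cusp_expansion h (slash k (mmul (\<beta> j) \<sigma>) f)" for j
    proof (cases "j < p")
      case True
      have M: "mmul (\<beta> j) \<sigma> = (of_int (a + int t * int j * c), of_int (b + int t * int j * d),
          of_int (int p * c), of_int (int p * d))"
        using True by (simp add: \<beta>_def \<sigma>_eq mmul_def)
      have pos: "(a + int t * int j * c) * (int p * d) - (b + int t * int j * d) * (int p * c) > 0"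
        using det p by (simp add: algebra_simps flip: right_diff_distrib)
      show ?thesis unfolding M by (rule has_cusp_expansion_slash_integer_matrix[OF f_holo f_cusps pos])
    next
      case False
      have M: "mmul (\<beta> j) \<sigma> = (of_int (int p * a), of_int (int p * b), of_int c, of_int d)"
        using False by (simp add: \<beta>_def \<sigma>_eq mmul_def)
      have pos: "(int p * a) * d - (int p * b) * c > 0"
        using det p by (simp add: algebra_simps flip: right_diff_distrib)
      show ?thesis unfolding M by (rule has_cusp_expansion_slash_integer_matrix[OF f_holo f_cusps pos])
    qed
    obtain h where "has_cusp_expansion h (\<lambda>z. \<Sum>j\<in>{0..p}. slash k (mmul (\<beta> j) \<sigma>) f z)"
      using has_cusp_expansion_sum[of "{0..p}" "\<lambda>j. slash k (mmul (\<beta> j) \<sigma>) f"] each by blast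
    hence expansion: "has_cusp_expansion h (\<lambda>z. C * (\<Sum>j\<in>{0..p}. slash k (mmul (\<beta> j) \<sigma>) f z))"
      by (rule has_cusp_expansion_cmult)
    have eq: "slash k \<sigma> (hecke_p k t p f) z = C * (\<Sum>j\<in>{0..p}. slash k (mmul (\<beta> j) \<sigma>) f z)"
      if "Im z > 0" for z
    proof -
      have "mdet (\<beta> j) > 0" for j using p by (simp add: \<beta>_def mdet_def)
      moreover have "mdet \<sigma> > 0" using mdet_SL2Z[OF \<sigma>] by simp
      ultimately show ?thesis
        unfolding hecke_eq[abs_def] slash_cmult slash_sum using slash_mmul that by simp
    qed
    have "has_cusp_expansion h (slash k \<sigma> (hecke_p k t p f))"
      by (rule has_cusp_expansion_cong[OF expansion]) (simp add: eq)
    thus ?thesis by blast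
  qed
  thus ?thesis using meromorphic_at_cusps_iff holomorphic_on_hecke_p[OF f_holo p] by blast
qed

section \<open>The operators \<open>T\<^sub>k\<^sup>(\<^sup>t\<^sup>)(p\<^sup>n)\<close>\<close>

lemma weakly_holomorphic_mf_cong:
  "(\<And>g. g \<in> G \<Longrightarrow> \<nu>1 g = \<nu>2 g) \<Longrightarrow> weakly_holomorphic_mf k G \<nu>1 = weakly_holomorphic_mf k G \<nu>2"
  unfolding weakly_holomorphic_mf_def by auto

lemma weakly_holomorphic_mf_diff_cmult:
  assumes F: "F \<in> weakly_holomorphic_mf k G \<nu>" and H: "H \<in> weakly_holomorphic_mf k G \<nu>"
  shows "(\<lambda>z. F z - c * H z) \<in> weakly_holomorphic_mf k G \<nu>"
proof -
  have F_holo: "F holomorphic_on upper_half_plane" and H_holo: "H holomorphic_on upper_half_plane"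
    and F_cusps: "meromorphic_at_cusps k F" and H_cusps: "meromorphic_at_cusps k H"
    using F H by (auto simp: weakly_holomorphic_mf_def)
  have holo: "(\<lambda>z. F z - c * H z) holomorphic_on upper_half_plane"
    using F_holo H_holo by (intro holomorphic_intros)
  have "\<exists>h. has_cusp_expansion h (slash k \<sigma> (\<lambda>z. F z - c * H z))" if \<sigma>: "\<sigma> \<in> SL2Z" for \<sigma>
  proof -
    obtain h1 where h1: "has_cusp_expansion h1 (slash k \<sigma> F)"
      using F_cusps \<sigma> meromorphic_at_cusps_iff[OF F_holo] by blast
    obtain h2 where h2: "has_cusp_expansion h2 (slash k \<sigma> H)"
      using H_cusps \<sigma> meromorphic_at_cusps_iff[OF H_holo] by blast
    have F_exp: "has_cusp_expansion (h1 * h2) (slash k \<sigma> F)"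
      and H_exp: "has_cusp_expansion (h1 * h2) (slash k \<sigma> H)"
      using has_cusp_expansion_common_period[OF h1 h2] by auto
    have "has_cusp_expansion (h1 * h2) (\<lambda>z. slash k \<sigma> F z + (- c) * slash k \<sigma> H z)"
      by (rule has_cusp_expansion_add[OF F_exp has_cusp_expansion_cmult[OF H_exp]])
    hence "has_cusp_expansion (h1 * h2) (slash k \<sigma> (\<lambda>z. F z - c * H z))"
      by (rule has_cusp_expansion_cong) (simp add: slash_diff slash_cmult)
    thus ?thesis by blast
  qed
  hence "meromorphic_at_cusps k (\<lambda>z. F z - c * H z)"
    unfolding meromorphic_at_cusps_iff[OF holo] by blast
  moreover have "\<forall>g\<in>G. \<forall>z\<in>upper_half_plane. slash k g (\<lambda>z. F z - c * H z) z = \<nu> g * (F z - c * H z)"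
    using F H by (auto simp: weakly_holomorphic_mf_def slash_diff slash_cmult algebra_simps)
  ultimately show ?thesis using holo by (simp add: weakly_holomorphic_mf_def)
qed

definition admissible_multiplier :: "nat \<Rightarrow> nat \<Rightarrow> (mat2 \<Rightarrow> complex) \<Rightarrow> bool" where
  "admissible_multiplier N t \<mu> \<longleftrightarrow> multiplier_system (fricke_group N) \<mu> \<and>
     (\<forall>g\<in>fricke_group N. \<mu> g ^ (2 * t) = 1) \<and> (\<forall>g\<in>Gamma0MN (N * t) t. \<mu> g = 1)"

lemma admissible_multiplier_power:
  "admissible_multiplier N t \<mu> \<Longrightarrow> admissible_multiplier N t (\<lambda>g. \<mu> g ^ m)"
  unfolding admissible_multiplier_def multiplier_system_def
  by (auto simp: norm_power power_mult_distrib simp flip: power_mult)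
     (metis mult.commute power_mult power_one)

lemma hecke_p_weakly_holomorphic:
  assumes "N \<in> {1,2,3,4}" "admissible_multiplier N t \<mu>"
    and "prime p" "\<not> p dvd N" "[p ^ 2 = 1] (mod 2 * t)"
    and f: "f \<in> weakly_holomorphic_mf k (fricke_group N) \<mu>"
  shows "hecke_p k t p f \<in> weakly_holomorphic_mf k (fricke_group N) (\<lambda>g. \<mu> g ^ p)"
proof -
  have f_holo: "f holomorphic_on upper_half_plane" and f_cusps: "meromorphic_at_cusps k f"
    and "\<forall>g\<in>fricke_group N. slash_invariant k \<mu> f g"
    using f by (auto simp: weakly_holomorphic_mf_def slash_invariant_def upper_half_plane_def)
  then interpret hecke_setting N t p k \<mu> f
    using assms by unfold_locales (auto simp: admissible_multiplier_def)
  have "\<forall>g\<in>fricke_group N. \<forall>z\<in>upper_half_plane.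
      slash k g (hecke_p k t p f) z = \<mu> g ^ p * hecke_p k t p f z"
    using hecke_p_invariant by (auto simp: slash_invariant_def upper_half_plane_def)
  thus ?thesis
    using holomorphic_on_hecke_p[OF f_holo p_pos] meromorphic_at_cusps_hecke_p[OF p_pos f_holo f_cusps]
    by (simp add: weakly_holomorphic_mf_def)
qed

lemma power_p_square_eq:
  fixes x :: complex
  assumes "[p ^ 2 = 1] (mod 2 * t)" "x ^ (2 * t) = 1" "p > 0"
  shows "x ^ (p ^ 2) = x"
proof -
  obtain m where m: "p^2 - 1 = 2 * t * m" using cong_to_1_nat[OF assms(1)] by blast
  moreover have "p^2 \<ge> 1" using assms(3) by simp
  ultimately have "p^2 = 1 + 2 * t * m" by linarith
  hence "x ^ (p^2) = x * (x ^ (2 * t)) ^ m" by (simp add: power_add power_mult)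
  thus ?thesis using assms(2) by simp
qed

text \<open>The recursion is of second order; the multiplier systems \<open>\<nu>\<^sup>p\<^sup>\<^sup>n\<close> and \<open>\<nu>\<^sup>p\<^sup>\<^sup>n\<^sup>+\<^sup>2\<close> agree because \<open>p\<^sup>2 \<equiv> 1 (mod 2t)\<close>.\<close>
lemma hecke_pp_weakly_holomorphic:
  assumes N: "N \<in> {1,2,3,4}" and \<mu>: "admissible_multiplier N t \<mu>"
    and p: "prime p" "\<not> p dvd N" and p_cong: "[p ^ 2 = 1] (mod 2 * t)"
    and f: "f \<in> weakly_holomorphic_mf k (fricke_group N) \<mu>"
  shows "hecke_pp k t p n f \<in> weakly_holomorphic_mf k (fricke_group N) (\<lambda>g. \<mu> g ^ (p ^ n)) \<and>
    hecke_pp k t p (Suc n) f \<in> weakly_holomorphic_mf k (fricke_group N) (\<lambda>g. \<mu> g ^ (p ^ Suc n))"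
proof (induction n)
  case 0
  show ?case using hecke_p_weakly_holomorphic[OF N \<mu> p p_cong f] f by simp
next
  case (Suc n)
  let ?M = "\<lambda>m. weakly_holomorphic_mf k (fricke_group N) (\<lambda>g. \<mu> g ^ (p ^ m))"
  have "hecke_p k t p (hecke_pp k t p (Suc n) f) \<in>
      weakly_holomorphic_mf k (fricke_group N) (\<lambda>g. (\<mu> g ^ (p ^ Suc n)) ^ p)"
    using Suc hecke_p_weakly_holomorphic[OF N admissible_multiplier_power[OF \<mu>] p p_cong] by blast
  also have "\<dots> = ?M (Suc (Suc n))"
    by (rule weakly_holomorphic_mf_cong) (simp add: power_mult[symmetric] mult.commute)
  finally have next_term: "hecke_p k t p (hecke_pp k t p (Suc n) f) \<in> ?M (Suc (Suc n))" .
  have "?M n = ?M (Suc (Suc n))"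
  proof (rule weakly_holomorphic_mf_cong)
    fix g assume "g \<in> fricke_group N"
    hence "(\<mu> g ^ (p ^ n)) ^ (2 * t) = 1"
      using admissible_multiplier_power[OF \<mu>, of "p ^ n"] by (simp add: admissible_multiplier_def)
    hence "(\<mu> g ^ (p ^ n)) ^ (p ^ 2) = \<mu> g ^ (p ^ n)"
      using power_p_square_eq[OF p_cong] prime_gt_0_nat[OF p(1)] by blast
    moreover have "p ^ Suc (Suc n) = p ^ n * p ^ 2" by (simp add: power2_eq_square)
    ultimately show "\<mu> g ^ (p ^ n) = \<mu> g ^ (p ^ Suc (Suc n))" by (simp only: power_mult)
  qed
  hence "hecke_pp k t p n f \<in> ?M (Suc (Suc n))" using Suc by simp
  thus ?case
    using Suc weakly_holomorphic_mf_diff_cmult[OF next_term] by simp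
qed

theorem proposition2p1:
  fixes N t p n :: nat and k :: int and \<nu> :: "mat2 \<Rightarrow> complex" and f :: "complex \<Rightarrow> complex"
  assumes "N \<in> {1, 2, 3, 4}"
    and "t > 0"
    and "multiplier_system (fricke_group N) \<nu>"
    and "\<forall>g\<in>fricke_group N. \<nu> g ^ (2 * t) = 1"
    and "\<forall>g\<in>Gamma0MN (N * t) t. \<nu> g = 1"
    and "prime p" and "\<not> p dvd N" and "[p ^ 2 = 1] (mod 2 * t)"
    and "n \<ge> 1"
    and "f \<in> weakly_holomorphic_mf k (fricke_group N) \<nu>"
  shows "hecke_pp k t p n f \<in> weakly_holomorphic_mf k (fricke_group N) (\<lambda>g. \<nu> g ^ (p ^ n))"
proof -
  have "admissible_multiplier N t \<nu>" using assms(3-5) by (simp add: admissible_multiplier_def)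
  thus ?thesis using hecke_pp_weakly_holomorphic assms(1,6-8,10) by blast
qed

end
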